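(* Let $\mathcal P$ and $\mathcal U$ be a Preisach operator and its potential operator satisfying the assumptions in the context, so that $q\frac{d}{dt}\mathcal P[q]-\frac{d}{dt}\mathcal U[q]\ge0$ a.e. for all $q\in W^{1,1}(0,T)$. Let $c>0$, $\kappa>0$, $e\in\mathbb R$ be constants and $f\in C^1(\mathbb R)$ with $f>0$ and $f'$ bounded on bounded sets. For $\varepsilon,E\in W^{1,1}(0,T)$ set $q=E/f(\varepsilon)$ and $$\sigma=c\varepsilon-eE+f'(\varepsilon)\,\mathcal U[q],\qquad D=e\varepsilon+\kappa E+\mathcal P[q],\qquad F=\tfrac c2\varepsilon^2+\tfrac\kappa2E^2+f(\varepsilon)\,\mathcal U[q].$$ Then $$\dot\varepsilon\,\sigma+\dot D\,E-\dot F\ge0\quad\text{a.e. in }(0,T).$$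
   Context: Play operator: for $r>0$ and $q\in W^{1,1}(0,T)$, $\xi_r=\xi_r[q]$ solves $|q-\xi_r|\le r$, $\dot\xi_r(q-\xi_r-rz)\ge0$ a.e. for all $|z|\le1$, $\xi_r(0)=\max\{q(0)-r,\min\{0,q(0)+r\}\}$. Preisach operator $\mathcal P[q](t)=\int_0^\infty g(r,\xi_r[q](t))\,dr$ with $g(r,0)=0$, $0\le\partial_vg(r,v)\le\mu(r)$, $\mu\in L^1(0,\infty)$, $|v|\partial_vg(r,v)\le\mu_1(r)$ with $\mu_1\in L^1(0,\infty)$; potential $\mathcal U[q](t)=\int_0^\infty G(r,\xi_r[q](t))\,dr$, $G(r,v)=\int_0^v v'\partial_vg(r,v')\,dv'$. *)

theory Defs
  imports "HOL-Analysis.Analysis"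
begin

definition W11 :: "real \<Rightarrow> (real \<Rightarrow> real) \<Rightarrow> bool" where
  "W11 T u \<longleftrightarrow> (\<exists>v. set_integrable lborel {0..T} v \<and>
      (\<forall>t\<in>{0..T}. u t = u 0 + (LINT s:{0..t}|lborel. v s)))"

definition play_solution :: "real \<Rightarrow> real \<Rightarrow> (real \<Rightarrow> real) \<Rightarrow> (real \<Rightarrow> real) \<Rightarrow> bool" where
  "play_solution T r q xi \<longleftrightarrow>
     W11 T xi \<and>
     (\<forall>t\<in>{0..T}. \<bar>q t - xi t\<bar> \<le> r) \<and>
     (AE t in lborel. t \<in> {0<..<T} \<longrightarrow>
        (\<exists>d. (xi has_real_derivative d) (at t) \<and>
             (\<forall>z. \<bar>z\<bar> \<le> 1 \<longrightarrow> d * (q t - xi t - r * z) \<ge> 0))) \<and>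
     xi 0 = max (q 0 - r) (min 0 (q 0 + r))"

text \<open>Preisach operator, given the family of play outputs xi r (r > 0).\<close>
definition preisach :: "(real \<Rightarrow> real \<Rightarrow> real) \<Rightarrow> (real \<Rightarrow> real \<Rightarrow> real) \<Rightarrow> real \<Rightarrow> real" where
  "preisach g xi t = (LINT r:{0<..}|lborel. g r (xi r t))"

definition Gpot :: "(real \<Rightarrow> real \<Rightarrow> real) \<Rightarrow> real \<Rightarrow> real \<Rightarrow> real" where
  "Gpot dg r v = (LBINT v'=0..v. v' * dg r v')"

definition potential :: "(real \<Rightarrow> real \<Rightarrow> real) \<Rightarrow> (real \<Rightarrow> real \<Rightarrow> real) \<Rightarrow> real \<Rightarrow> real" where
  "potential dg xi t = (LINT r:{0<..}|lborel. Gpot dg r (xi r t))"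

end

theory Submission
  imports Defs
begin

text \<open>At a time \<open>t\<close> where \<open>\<epsilon>\<close>, \<open>E\<close> and almost every play output \<open>\<xi>\<^sub>r\<close> are differentiable,
  the expression to be estimated equals \<open>f(\<epsilon>) (q P' - U')\<close>. Differentiating under the integral,
  \<open>P' = \<integral> \<partial>\<^sub>vg(r,\<xi>\<^sub>r) \<xi>\<^sub>r' dr\<close> and \<open>U' = \<integral> \<xi>\<^sub>r \<partial>\<^sub>vg(r,\<xi>\<^sub>r) \<xi>\<^sub>r' dr\<close>, so
  \<open>q P' - U' = \<integral> \<partial>\<^sub>vg(r,\<xi>\<^sub>r) \<xi>\<^sub>r' (q - \<xi>\<^sub>r) dr \<ge> 0\<close>, because a play satisfies
  \<open>\<xi>\<^sub>r' (q - \<xi>\<^sub>r) \<ge> 0\<close> at every point of differentiability: it cannot increase while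
  \<open>q - \<xi>\<^sub>r < r\<close> nor decrease while \<open>q - \<xi>\<^sub>r > -r\<close>. The same monotonicity makes the plays
  uniformly Lipschitz near \<open>t\<close> (which dominates the difference quotients) and \<open>1\<close>-Lipschitz in \<open>r\<close>
  (which makes the family jointly continuous), and a Fubini argument shows that for almost every
  \<open>t\<close> almost every play is differentiable at \<open>t\<close>.\<close>

section \<open>Analysis on the real line\<close>

lemma AE_lborel_if_negligible:
  assumes "negligible N" and "\<And>x. x \<notin> N \<Longrightarrow> P x"
  shows "AE x in lborel. P x"
proof -
  have "AE x in lebesgue. P x"
    using assms by (auto simp: eventually_ae_filter_negligible)
  then show ?thesis by (simp add: AE_completion_iff)
qed

lemma integral_nonpos_AE:
  fixes v :: "real \<Rightarrow> real"
  assumes int: "v integrable_on {a..b}" and nonpos: "AE x in lborel. x \<in> {a<..<b} \<longrightarrow> v x \<le> 0"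
  shows "integral {a..b} v \<le> 0"
proof -
  have "AE x in lborel. x \<in> {a..b} \<longrightarrow> v x = min 0 (v x)"
    using nonpos AE_lborel_singleton[of a] AE_lborel_singleton[of b] by eventually_elim auto
  from has_integral_AE[OF this, THEN iffD1, OF integrable_integral[OF int]]
  show ?thesis by (rule has_integral_le[OF _ has_integral_0]) simp
qed

lemma indefinite_integral_increment:
  fixes v :: "real \<Rightarrow> real"
  assumes "v integrable_on {a..b}" "a \<le> x" "x \<le> y" "y \<le> b"
  shows "integral {a..y} v - integral {a..x} v = integral {x..y} v"
proof -
  have "v integrable_on {a..y}" using assms by (intro integrable_subinterval_real[OF assms(1)]) auto
  then have "integral {a..x} v + integral {x..y} v = integral {a..y} v"
    using assms by (intro Henstock_Kurzweil_Integration.integral_combine) auto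
  then show ?thesis by simp
qed

lemma integral_representation_increment:
  fixes u v :: "real \<Rightarrow> real"
  assumes "v integrable_on {0..T}" "\<And>t. t \<in> {0..T} \<Longrightarrow> u t = u 0 + integral {0..t} v"
    and "0 \<le> a" "a \<le> b" "b \<le> T"
  shows "u b - u a = integral {a..b} v"
proof -
  have "integral {0..b} v - integral {0..a} v = integral {a..b} v"
    by (rule indefinite_integral_increment) (use assms in auto)
  then show ?thesis using assms(2)[of a] assms(2)[of b] assms(3-5) by auto
qed

lemma integral_right_averages_converge:
  fixes v :: "real \<Rightarrow> real"
  assumes "\<And>c d. v integrable_on {c..d}"
  obtains N where "negligible N"
    "\<And>x e. x \<notin> N \<Longrightarrow> 0 < e \<Longrightarrow> \<exists>d>0. \<forall>h. 0 < h \<and> h < d \<longrightarrow> \<bar>integral {x..x+h} v / h - v x\<bar> < e"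
proof -
  obtain N where "negligible N" and N: "\<And>x e. \<lbrakk>x \<notin> N; 0 < e\<rbrakk> \<Longrightarrow>
      \<exists>d>0. \<forall>h. 0 < h \<and> h < d \<longrightarrow> norm (integral (cbox x (x + h *\<^sub>R One)) v /\<^sub>R h ^ DIM(real) - v x) < e"
    using integrable_ccontinuous_explicit[of v] assms by auto
  show ?thesis
  proof (rule that[OF \<open>negligible N\<close>])
    fix x e :: real assume "x \<notin> N" "0 < e"
    from N[OF this] show "\<exists>d>0. \<forall>h. 0 < h \<and> h < d \<longrightarrow> \<bar>integral {x..x+h} v / h - v x\<bar> < e"
      by (simp add: divide_inverse_commute)
  qed
qed

text \<open>Left derivatives of the indefinite integral are right derivatives for the reflected integrand.\<close>

lemma indefinite_integral_has_real_derivative_ae: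
  fixes v :: "real \<Rightarrow> real"
  assumes int: "v integrable_on {a..b}"
  shows "AE x in lborel. x \<in> {a<..<b} \<longrightarrow> ((\<lambda>t. integral {a..t} v) has_real_derivative v x) (at x)"
proof -
  define v' where "v' x = (if x \<in> {a..b} then v x else 0)" for x
  have "v' integrable_on UNIV" unfolding v'_def using int integrable_restrict_UNIV by blast
  then have v'_int: "v' integrable_on {c..d}" for c d by (rule integrable_on_subinterval) auto
  define w where "w x = v' (- x)" for x
  have w_int: "w integrable_on {c..d}" for c d
    using Henstock_Kurzweil_Integration.integrable_reflect_real[where f=v' and a="-d" and b="-c"] v'_int[of "-d" "-c"] by (simp add: w_def[abs_def])
  obtain N1 where N1: "negligible N1"
    "\<And>x e. x \<notin> N1 \<Longrightarrow> 0 < e \<Longrightarrow> \<exists>d>0. \<forall>h. 0 < h \<and> h < d \<longrightarrow> \<bar>integral {x..x+h} v' / h - v' x\<bar> < e"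
    using integral_right_averages_converge[OF v'_int] by metis
  obtain N2 where N2: "negligible N2"
    "\<And>x e. x \<notin> N2 \<Longrightarrow> 0 < e \<Longrightarrow> \<exists>d>0. \<forall>h. 0 < h \<and> h < d \<longrightarrow> \<bar>integral {x..x+h} w / h - w x\<bar> < e"
    using integral_right_averages_converge[OF w_int] by metis
  have "negligible (uminus ` N2)"
    by (rule negligible_differentiable_image_negligible[OF order_refl N2(1)]) (auto intro!: derivative_intros)
  then show ?thesis
  proof (rule AE_lborel_if_negligible[OF negligible_Un[OF N1(1)]], intro impI)
    fix x assume x: "x \<notin> N1 \<union> uminus ` N2" "x \<in> {a<..<b}"
    then have xN2: "-x \<notin> N2" by (metis UnI2 image_eqI minus_minus)
    have vx: "v' x = v x" "w (-x) = v x" using x by (auto simp: v'_def w_def)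
    show "((\<lambda>t. integral {a..t} v) has_real_derivative v x) (at x)"
      unfolding DERIV_def LIM_eq real_norm_def
    proof (intro allI impI)
      fix e :: real assume e: "e > 0"
      obtain d1 where d1: "d1 > 0" "\<And>h. 0 < h \<and> h < d1 \<Longrightarrow> \<bar>integral {x..x+h} v' / h - v' x\<bar> < e"
        using N1(2)[of x e] x e by auto
      obtain d2 where d2: "d2 > 0" "\<And>h. 0 < h \<and> h < d2 \<Longrightarrow> \<bar>integral {-x..-x+h} w / h - w (-x)\<bar> < e"
        using N2(2)[OF xN2 e] by auto
      show "\<exists>s>0. \<forall>h. h \<noteq> 0 \<and> \<bar>h - 0\<bar> < s \<longrightarrow> \<bar>(integral {a..x + h} v - integral {a..x} v) / h - v x\<bar> < e"
      proof (intro exI[of _ "min (min d1 d2) (min (b - x) (x - a))"] conjI allI impI)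
        show "0 < min (min d1 d2) (min (b - x) (x - a))" using d1 d2 x by auto
        fix h assume h: "h \<noteq> 0 \<and> \<bar>h - 0\<bar> < min (min d1 d2) (min (b - x) (x - a))"
        show "\<bar>(integral {a..x + h} v - integral {a..x} v) / h - v x\<bar> < e"
        proof (cases "h > 0")
          case True
          have "integral {a..x+h} v - integral {a..x} v = integral {x..x+h} v"
            by (rule indefinite_integral_increment[OF int]) (use x h True in auto)
          also have "\<dots> = integral {x..x+h} v'"
            using x h by (intro integral_cong) (auto simp: v'_def)
          finally have "integral {a..x+h} v - integral {a..x} v = integral {x..x+h} v'" .
          then show ?thesis using d1(2)[of h] h True vx by simp
        next
          case False
          then have hn: "h < 0" using h by auto
          have "integral {a..x} v - integral {a..x+h} v = integral {x+h..x} v"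
            by (rule indefinite_integral_increment[OF int]) (use x h hn in auto)
          moreover have "integral {x+h..x} v = integral {x+h..x} v'"
            using x h hn by (intro integral_cong) (auto simp: v'_def)
          moreover have "integral {-x..-x+(-h)} w = integral {x+h..x} v'"
            using Henstock_Kurzweil_Integration.integral_reflect_real[where f=v' and a="x+h" and b=x] by (simp add: w_def[abs_def])
          moreover have "\<bar>integral {-x..-x+(-h)} w / (-h) - w (-x)\<bar> < e"
            using d2(2)[of "-h"] h hn by auto
          ultimately have "integral {a..x+h} v - integral {a..x} v = - integral {-x..-x+(-h)} w" by linarith
          then have "(integral {a..x+h} v - integral {a..x} v) / h = integral {-x..-x+(-h)} w / (-h)"
            by simp
          with \<open>\<bar>integral {-x..-x+(-h)} w / (-h) - w (-x)\<bar> < e\<close> vx show ?thesis by simp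
        qed
      qed
    qed
  qed
qed

lemma has_real_derivative_diff_quotients_tendsto:
  fixes F :: "real \<Rightarrow> real"
  assumes "(F has_real_derivative d) (at t)" "\<And>i. X i \<noteq> 0" "X \<longlonglongrightarrow> 0"
  shows "(\<lambda>i. (F (t + X i) - F t) / X i) \<longlonglongrightarrow> d"
proof -
  have "((\<lambda>h. (F (t + h) - F t) / h) \<longlongrightarrow> d) (at 0)" using assms(1) by (simp add: DERIV_def)
  then show ?thesis using assms(2,3) unfolding tendsto_at_iff_sequentially comp_def by blast
qed

lemma has_real_derivative_nonneg_if_right_mono:
  fixes f :: "real \<Rightarrow> real"
  assumes "(f has_real_derivative d) (at t)" "\<delta> > 0" "\<And>h. 0 < h \<Longrightarrow> h < \<delta> \<Longrightarrow> f t \<le> f (t + h)"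
  shows "d \<ge> 0"
proof (rule ccontr)
  assume "\<not> d \<ge> 0"
  then obtain \<delta>' where \<delta>': "\<delta>' > 0" "\<And>h. 0 < h \<Longrightarrow> h < \<delta>' \<Longrightarrow> f (t + h) < f t"
    using DERIV_neg_dec_right[OF assms(1)] by force
  define h where "h = min \<delta> \<delta>' / 2"
  have h: "0 < h" "h < \<delta>" "h < \<delta>'" using \<delta>'(1) \<open>\<delta> > 0\<close> by (auto simp: h_def)
  from \<delta>'(2)[OF h(1,3)] assms(3)[OF h(1,2)] show False by simp
qed

lemma has_real_derivative_local_lipschitz:
  fixes q :: "real \<Rightarrow> real"
  assumes "(q has_real_derivative d) (at t)"
  obtains \<delta> where "\<delta> > 0" "\<And>s. \<bar>s - t\<bar> < \<delta> \<Longrightarrow> \<bar>q s - q t\<bar> \<le> (\<bar>d\<bar> + 1) * \<bar>s - t\<bar>"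
proof -
  have "((\<lambda>h. (q (t + h) - q t) / h) \<longlongrightarrow> d) (at 0)" using assms by (simp add: DERIV_def)
  then obtain \<delta> where \<delta>: "\<delta> > 0" "\<And>h. h \<noteq> 0 \<Longrightarrow> \<bar>h\<bar> < \<delta> \<Longrightarrow> \<bar>(q (t + h) - q t) / h - d\<bar> < 1"
    unfolding LIM_eq real_norm_def by (metis diff_zero zero_less_one)
  have "\<bar>q s - q t\<bar> \<le> (\<bar>d\<bar> + 1) * \<bar>s - t\<bar>" if "\<bar>s - t\<bar> < \<delta>" for s
  proof (cases "s = t")
    case False
    have "\<bar>(q s - q t) / (s - t) - d\<bar> < 1" using \<delta>(2)[of "s - t"] that False by simp
    then have "\<bar>(q s - q t) / (s - t)\<bar> \<le> \<bar>d\<bar> + 1" by arith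
    then show ?thesis using False by (simp add: abs_divide divide_le_eq)
  qed simp
  with \<delta>(1) show ?thesis by (rule that)
qed

lemma has_real_derivative_abs_le_if_lipschitz:
  fixes f :: "real \<Rightarrow> real"
  assumes "(f has_real_derivative d) (at t)" "\<delta> > 0" "\<And>s. \<bar>s - t\<bar> < \<delta> \<Longrightarrow> \<bar>f s - f t\<bar> \<le> L * \<bar>s - t\<bar>"
  shows "\<bar>d\<bar> \<le> L"
proof (rule tendsto_upperbound)
  have "((\<lambda>h. (f (t + h) - f t) / h) \<longlongrightarrow> d) (at 0)" using assms(1) by (simp add: DERIV_def)
  then show "((\<lambda>h. \<bar>(f (t + h) - f t) / h\<bar>) \<longlongrightarrow> \<bar>d\<bar>) (at 0)" by (rule tendsto_rabs)
  have "eventually (\<lambda>h. h \<noteq> 0 \<and> \<bar>h\<bar> < \<delta>) (at (0::real))"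
    using assms(2) by (auto simp: eventually_at dist_real_def)
  then show "eventually (\<lambda>h. \<bar>(f (t + h) - f t) / h\<bar> \<le> L) (at 0)"
  proof eventually_elim
    case (elim h)
    then show ?case using assms(3)[of "t + h"] by (simp add: abs_divide divide_le_eq)
  qed
qed simp

lemma continuous_on_barrier:
  fixes w :: "real \<Rightarrow> real"
  assumes "t \<le> s" and cont: "continuous_on {t..s} w" and "w t \<le> L"
    and no_escape: "\<And>t0 u. t \<le> t0 \<Longrightarrow> t0 < u \<Longrightarrow> u \<le> s \<Longrightarrow> w t0 \<le> L \<Longrightarrow>
                  (\<forall>x\<in>{t0<..u}. L < w x) \<Longrightarrow> w u \<le> w t0"
  shows "w s \<le> L"
proof (rule ccontr)
  assume ws: "\<not> w s \<le> L"
  define S where "S = {t..s} \<inter> w -` {..L}"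
  have "closed S" unfolding S_def by (rule continuous_closed_preimage[OF cont]) auto
  moreover have tS: "t \<in> S" using assms by (auto simp: S_def)
  moreover have bdd: "bdd_above S" unfolding S_def bdd_above_def by auto
  ultimately have t0S: "Sup S \<in> S" by (intro closed_contains_Sup) auto
  have tt0: "t \<le> Sup S" using tS bdd by (rule cSup_upper)
  have t0s: "Sup S < s" using t0S ws by (auto simp: S_def order_le_less)
  have above: "L < w x" if "x \<in> {Sup S<..s}" for x
  proof (rule ccontr)
    assume "\<not> L < w x"
    then have "x \<in> S" using that tt0 by (auto simp: S_def)
    then show False using cSup_upper[OF _ bdd] that by fastforce
  qed
  have "w s \<le> w (Sup S)" by (rule no_escape[OF tt0 t0s order_refl]) (use t0S above in \<open>auto simp: S_def\<close>)
  then show False using t0S ws by (auto simp: S_def)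
qed

lemma has_real_derivative_LBINT:
  fixes g :: "real \<Rightarrow> real"
  assumes "continuous_on UNIV g"
  shows "((\<lambda>u. LBINT y=0..u. g y) has_real_derivative g v) (at v)"
proof -
  let ?I = "{- \<bar>v\<bar> - 1..\<bar>v\<bar> + 1}"
  have "((\<lambda>u. LBINT y=ereal 0..u. g y) has_vector_derivative g v) (at v within ?I)"
    by (rule interval_integral_FTC2) (auto intro: continuous_on_subset[OF assms])
  moreover have "at v within ?I = at v"
    by (rule at_within_interior) (auto simp: interior_atLeastAtMost_real)
  ultimately show ?thesis by (simp add: zero_ereal_def has_real_derivative_iff_has_vector_derivative)
qed

lemma borel_measurable_derivative:
  fixes F :: "real \<Rightarrow> real"
  assumes d: "\<And>v. (F has_real_derivative F' v) (at v)"
  shows "F' \<in> borel_measurable borel"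
proof (rule borel_measurable_LIMSEQ_real[where u="\<lambda>n v. (F (v + 1 / Suc n) - F v) / (1 / Suc n)"])
  show "(\<lambda>n. (F (v + 1 / Suc n) - F v) / (1 / Suc n)) \<longlonglongrightarrow> F' v" for v
    by (rule has_real_derivative_diff_quotients_tendsto[OF d])
      (use LIMSEQ_inverse_real_of_nat in \<open>auto simp: inverse_eq_divide\<close>)
  have c: "continuous_on UNIV F" using d by (meson DERIV_isCont continuous_at_imp_continuous_on)
  show "(\<lambda>v. (F (v + 1 / Suc n) - F v) / (1 / Suc n)) \<in> borel_measurable borel" for n
    by (intro borel_measurable_continuous_onI continuous_intros continuous_on_compose2[OF c]) auto
qed

lemma LBINT_id_times_derivative:
  fixes g g' :: "real \<Rightarrow> real"
  assumes g: "\<And>v. (g has_real_derivative g' v) (at v)" and bound: "\<And>v. \<bar>g' v\<bar> \<le> M"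
  shows "(LBINT x=0..v. x * g' x) = v * g v - (LBINT x=0..v. g x)"
proof -
  define H where "H v = v * g v - (LBINT x=0..v. g x)" for v
  have c: "continuous_on UNIV g" using g by (meson DERIV_isCont continuous_at_imp_continuous_on)
  have H: "(H has_real_derivative x * g' x) (at x)" for x
    unfolding H_def using DERIV_diff[OF DERIV_mult'[OF DERIV_ident g] has_real_derivative_LBINT[OF c]] by simp
  have meas: "g' \<in> borel_measurable borel" by (rule borel_measurable_derivative[OF g])
  have ftc: "(LBINT x=a..b. x * g' x) = H b - H a" if "a \<le> b" for a b :: real
  proof -
    have "set_integrable lborel {a..b} (\<lambda>x. x * g' x)"
      unfolding set_integrable_def
    proof (rule integrableI_bounded_set[where A="{a..b}" and B="(\<bar>a\<bar> + \<bar>b\<bar>) * M"])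
      show "AE x in lborel. x \<in> {a..b} \<longrightarrow> norm (indicator {a..b} x *\<^sub>R (x * g' x)) \<le> (\<bar>a\<bar> + \<bar>b\<bar>) * M"
        using bound by (auto intro!: AE_I2 mult_mono simp: abs_mult)
    qed (use meas in \<open>auto simp: emeasure_lborel_Icc_eq\<close>)
    moreover have "((\<lambda>x. x * g' x) has_integral H b - H a) {a..b}"
    proof (rule fundamental_theorem_of_calculus[OF that])
      fix x assume "x \<in> {a..b}"
      show "(H has_vector_derivative x * g' x) (at x within {a..b})"
        using H[of x] by (simp add: has_real_derivative_iff_has_vector_derivative has_vector_derivative_at_within)
    qed
    ultimately show ?thesis by (simp add: interval_integral_eq_integral[OF that] integral_unique)
  qed
  have H0: "H 0 = 0" by (simp add: H_def zero_ereal_def[symmetric])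
  have "(LBINT x=0..v. x * g' x) = H v"
  proof (cases "0 \<le> v")
    case True
    then show ?thesis using ftc[OF True] H0 by (simp add: zero_ereal_def[symmetric])
  next
    case False
    then have "(LBINT x=v..0. x * g' x) = H 0 - H v" using ftc[of v 0] by (simp add: zero_ereal_def[symmetric])
    then show ?thesis using H0 by (subst interval_integral_endpoints_reverse) (simp add: zero_ereal_def[symmetric])
  qed
  then show ?thesis by (simp add: H_def)
qed

section \<open>Differentiability as a Borel condition\<close>

text \<open>Differentiability expressed through countably many rational difference quotients,
  so that the set where it holds is Borel measurable.\<close>

definition rat_diff_quotients_Cauchy :: "(real \<Rightarrow> real) \<Rightarrow> real \<Rightarrow> bool" where
  "rat_diff_quotients_Cauchy f t \<longleftrightarrow> (\<forall>k::nat. \<exists>m::nat. \<forall>p p' :: rat.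
    0 < \<bar>real_of_rat p\<bar> \<and> \<bar>real_of_rat p\<bar> < 1 / Suc m \<and> 0 < \<bar>real_of_rat p'\<bar> \<and> \<bar>real_of_rat p'\<bar> < 1 / Suc m \<longrightarrow>
    \<bar>(f (t + real_of_rat p) - f t) / real_of_rat p - (f (t + real_of_rat p') - f t) / real_of_rat p'\<bar> \<le> 1 / Suc k)"

lemma has_real_derivative_imp_rat_diff_quotients_Cauchy:
  fixes f :: "real \<Rightarrow> real"
  assumes "(f has_real_derivative d) (at t)"
  shows "rat_diff_quotients_Cauchy f t"
  unfolding rat_diff_quotients_Cauchy_def
proof
  fix k :: nat
  have "((\<lambda>h. (f (t + h) - f t) / h) \<longlongrightarrow> d) (at 0)" using assms by (simp add: DERIV_def)
  moreover have "(0::real) < 1 / (2 * Suc k)" by simp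
  ultimately obtain s where s: "s > 0"
    "\<And>h. h \<noteq> 0 \<Longrightarrow> \<bar>h\<bar> < s \<Longrightarrow> \<bar>(f (t + h) - f t) / h - d\<bar> < 1 / (2 * Suc k)"
    unfolding LIM_eq real_norm_def by (metis diff_zero)
  obtain m :: nat where m: "1 / Suc m < s" using nat_approx_posE[OF s(1)] by blast
  show "\<exists>m::nat. \<forall>p p' :: rat.
    0 < \<bar>real_of_rat p\<bar> \<and> \<bar>real_of_rat p\<bar> < 1 / Suc m \<and> 0 < \<bar>real_of_rat p'\<bar> \<and> \<bar>real_of_rat p'\<bar> < 1 / Suc m \<longrightarrow>
    \<bar>(f (t + real_of_rat p) - f t) / real_of_rat p - (f (t + real_of_rat p') - f t) / real_of_rat p'\<bar> \<le> 1 / Suc k"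
  proof (intro exI[of _ m] allI impI)
    fix p p' :: rat
    assume a: "0 < \<bar>real_of_rat p\<bar> \<and> \<bar>real_of_rat p\<bar> < 1 / Suc m \<and> 0 < \<bar>real_of_rat p'\<bar> \<and> \<bar>real_of_rat p'\<bar> < 1 / Suc m"
    define \<epsilon> :: real where "\<epsilon> = 1 / (2 * Suc k)"
    have "\<bar>(f (t + real_of_rat p) - f t) / real_of_rat p - d\<bar> < \<epsilon>"
      "\<bar>(f (t + real_of_rat p') - f t) / real_of_rat p' - d\<bar> < \<epsilon>"
      unfolding \<epsilon>_def using a m by (intro s(2); force)+
    moreover have "2 * \<epsilon> = 1 / Suc k" by (simp add: \<epsilon>_def field_simps)
    ultimately show "\<bar>(f (t + real_of_rat p) - f t) / real_of_rat p - (f (t + real_of_rat p') - f t) / real_of_rat p'\<bar> \<le> 1 / Suc k"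
      by (simp only: abs_less_iff abs_le_iff) linarith
  qed
qed

lemma tendsto_at_0_if_Cauchy:
  fixes Q :: "real \<Rightarrow> real"
  assumes "\<And>e. e > 0 \<Longrightarrow> \<exists>\<rho>>0. \<forall>h h'. h \<noteq> 0 \<and> \<bar>h\<bar> < \<rho> \<and> h' \<noteq> 0 \<and> \<bar>h'\<bar> < \<rho> \<longrightarrow> \<bar>Q h - Q h'\<bar> < e"
  obtains L where "(Q \<longlongrightarrow> L) (at 0)"
proof -
  have "cauchy_filter (filtermap Q (at 0))"
    unfolding cauchy_filter_metric_filtermap
  proof (intro allI impI)
    fix e :: real assume "e > 0"
    then obtain \<rho> where \<rho>: "\<rho> > 0"
      "\<And>h h'. h \<noteq> 0 \<and> \<bar>h\<bar> < \<rho> \<and> h' \<noteq> 0 \<and> \<bar>h'\<bar> < \<rho> \<Longrightarrow> \<bar>Q h - Q h'\<bar> < e"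
      using assms by blast
    have "eventually (\<lambda>h. h \<noteq> 0 \<and> \<bar>h\<bar> < \<rho>) (at (0::real))"
      using \<rho>(1) by (auto simp: eventually_at dist_real_def)
    then show "\<exists>P. eventually P (at 0) \<and> (\<forall>x y. P x \<and> P y \<longrightarrow> dist (Q x) (Q y) < e)"
      using \<rho>(2) by (auto simp: dist_real_def)
  qed
  then obtain L where "filtermap Q (at 0) \<le> nhds L"
    using cauchy_filter_convergent convergent_filter_iff by blast
  then show ?thesis by (intro that) (simp add: filterlim_def)
qed

lemma rat_approx_continuous:
  fixes Q :: "real \<Rightarrow> real"
  assumes "isCont Q h" "\<rho> > 0" "\<eta> > 0"
  obtains p where "p \<in> \<rat>" "\<bar>p - h\<bar> < \<rho>" "\<bar>Q p - Q h\<bar> < \<eta>"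
proof -
  obtain \<rho>' where \<rho>': "\<rho>' > 0" "\<And>x. \<bar>x - h\<bar> < \<rho>' \<Longrightarrow> \<bar>Q x - Q h\<bar> < \<eta>"
    using assms(1,3) unfolding continuous_at_eps_delta by (auto simp: dist_real_def)
  have "h - min \<rho> \<rho>' < h + min \<rho> \<rho>'" using assms(2) \<rho>'(1) by (simp add: min_def)
  then obtain p where "p \<in> \<rat>" "h - min \<rho> \<rho>' < p" "p < h + min \<rho> \<rho>'"
    using Rats_dense_in_real by blast
  then show ?thesis using \<rho>'(2)[of p] by (intro that) auto
qed

lemma rat_diff_quotients_Cauchy_imp_differentiable:
  fixes f :: "real \<Rightarrow> real"
  assumes cont: "\<And>x. \<bar>x - t\<bar> < \<delta> \<Longrightarrow> isCont f x" and "\<delta> > 0" and C: "rat_diff_quotients_Cauchy f t"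
  shows "\<exists>d. (f has_real_derivative d) (at t)"
proof -
  define Q where "Q h = (f (t + h) - f t) / h" for h
  have Q_cont: "isCont Q h" if "h \<noteq> 0" "\<bar>h\<bar> < \<delta>" for h
    unfolding Q_def using that by (intro continuous_intros isCont_o2[OF _ cont]) auto
  have Cauchy: "\<bar>Q h - Q h'\<bar> \<le> 1 / Suc k"
    if "\<And>p p'. p \<in> \<rat> \<Longrightarrow> p' \<in> \<rat> \<Longrightarrow> p \<noteq> 0 \<Longrightarrow> \<bar>p\<bar> < \<rho> \<Longrightarrow> p' \<noteq> 0 \<Longrightarrow> \<bar>p'\<bar> < \<rho> \<Longrightarrow>
        \<bar>Q p - Q p'\<bar> \<le> 1 / Suc k"
      and "\<rho> \<le> \<delta>" "h \<noteq> 0" "\<bar>h\<bar> < \<rho>" "h' \<noteq> 0" "\<bar>h'\<bar> < \<rho>" for \<rho> h h' k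
  proof (rule field_le_epsilon)
    fix \<eta> :: real assume "\<eta> > 0"
    then have \<eta>: "\<eta> / 2 > 0" by simp
    have "isCont Q h" "min \<bar>h\<bar> (\<rho> - \<bar>h\<bar>) > 0" using that Q_cont by auto
    then obtain p where p: "p \<in> \<rat>" "\<bar>p - h\<bar> < min \<bar>h\<bar> (\<rho> - \<bar>h\<bar>)" "\<bar>Q p - Q h\<bar> < \<eta> / 2"
      using rat_approx_continuous \<eta> by blast
    have "isCont Q h'" "min \<bar>h'\<bar> (\<rho> - \<bar>h'\<bar>) > 0" using that Q_cont by auto
    then obtain p' where p': "p' \<in> \<rat>" "\<bar>p' - h'\<bar> < min \<bar>h'\<bar> (\<rho> - \<bar>h'\<bar>)" "\<bar>Q p' - Q h'\<bar> < \<eta> / 2"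
      using rat_approx_continuous \<eta> by blast
    have "\<bar>Q p - Q p'\<bar> \<le> 1 / Suc k" using that(1)[OF p(1) p'(1)] p(2) p'(2) by (auto simp: abs_if split: if_splits)
    then show "\<bar>Q h - Q h'\<bar> \<le> 1 / Suc k + \<eta>" using p(3) p'(3) by linarith
  qed
  have "\<exists>\<rho>>0. \<forall>h h'. h \<noteq> 0 \<and> \<bar>h\<bar> < \<rho> \<and> h' \<noteq> 0 \<and> \<bar>h'\<bar> < \<rho> \<longrightarrow> \<bar>Q h - Q h'\<bar> < e" if e: "e > 0" for e
  proof -
    obtain k :: nat where k: "1 / Suc k < e" using nat_approx_posE[OF e] by blast
    obtain m :: nat where m: "\<And>p p' :: rat.
        0 < \<bar>real_of_rat p\<bar> \<and> \<bar>real_of_rat p\<bar> < 1 / Suc m \<and> 0 < \<bar>real_of_rat p'\<bar> \<and> \<bar>real_of_rat p'\<bar> < 1 / Suc m \<Longrightarrow>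
        \<bar>Q (real_of_rat p) - Q (real_of_rat p')\<bar> \<le> 1 / Suc k"
      using C unfolding rat_diff_quotients_Cauchy_def Q_def by blast
    have "\<bar>Q p - Q p'\<bar> \<le> 1 / Suc k"
      if "p \<in> \<rat>" "p' \<in> \<rat>" "p \<noteq> 0" "\<bar>p\<bar> < min \<delta> (1 / Suc m)" "p' \<noteq> 0" "\<bar>p'\<bar> < min \<delta> (1 / Suc m)" for p p'
      using that m by (auto elim!: Rats_cases)
    then have "\<bar>Q h - Q h'\<bar> \<le> 1 / Suc k"
      if "h \<noteq> 0" "\<bar>h\<bar> < min \<delta> (1 / Suc m)" "h' \<noteq> 0" "\<bar>h'\<bar> < min \<delta> (1 / Suc m)" for h h'
      by (rule Cauchy[where \<rho>="min \<delta> (1 / Suc m)"]) (use that in auto)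
    then show ?thesis using k \<open>\<delta> > 0\<close> by (intro exI[of _ "min \<delta> (1 / Suc m)"]) force
  qed
  then obtain L where "(Q \<longlongrightarrow> L) (at 0)" by (rule tendsto_at_0_if_Cauchy)
  then show ?thesis unfolding DERIV_def Q_def[abs_def] by blast
qed

lemma rat_diff_quotients_Cauchy_measurable:
  fixes X :: "real \<Rightarrow> real \<Rightarrow> real"
  assumes X_meas [measurable]: "(\<lambda>p. X (fst p) (snd p)) \<in> borel_measurable borel"
  shows "{p :: real \<times> real. rat_diff_quotients_Cauchy (X (fst p)) (snd p)} \<in> sets borel"
proof -
  have shift [measurable]: "(\<lambda>p. X (fst p) (snd p + c)) \<in> borel_measurable borel" for c
    using measurable_compose[OF _ X_meas, of "\<lambda>p. (fst p, snd p + c)"]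
    by (simp add: borel_measurable_continuous_onI continuous_intros)
  have "Measurable.pred borel (\<lambda>p::real \<times> real. rat_diff_quotients_Cauchy (X (fst p)) (snd p))"
    unfolding rat_diff_quotients_Cauchy_def by measurable
  then show ?thesis by (simp add: pred_def)
qed

section \<open>Parametric integrals\<close>

lemma LIMSEQ_floor_grid: "(\<lambda>n. of_int \<lfloor>real (Suc n) * x\<rfloor> / real (Suc n)) \<longlonglongrightarrow> x"
proof (rule tendsto_sandwich[of "\<lambda>n. x - inverse (real (Suc n))" _ _ "\<lambda>n. x"])
  show "\<forall>\<^sub>F n in sequentially. x - inverse (real (Suc n)) \<le> of_int \<lfloor>real (Suc n) * x\<rfloor> / real (Suc n)"
  proof (intro always_eventually allI)
    fix n
    have "real (Suc n) * x - 1 \<le> of_int \<lfloor>real (Suc n) * x\<rfloor>" by linarith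
    then have "(real (Suc n) * x - 1) / real (Suc n) \<le> of_int \<lfloor>real (Suc n) * x\<rfloor> / real (Suc n)"
      by (rule divide_right_mono) simp
    then show "x - inverse (real (Suc n)) \<le> of_int \<lfloor>real (Suc n) * x\<rfloor> / real (Suc n)"
      by (simp add: field_simps)
  qed
  show "\<forall>\<^sub>F n in sequentially. of_int \<lfloor>real (Suc n) * x\<rfloor> / real (Suc n) \<le> x"
    by (intro always_eventually allI) (simp add: divide_le_eq mult.commute)
  show "(\<lambda>n. x - inverse (real (Suc n))) \<longlonglongrightarrow> x"
    using tendsto_diff[OF tendsto_const LIMSEQ_inverse_real_of_nat, of x] by simp
qed simp

lemma borel_measurable_Caratheodory:
  fixes h :: "'a \<Rightarrow> real \<Rightarrow> real"
  assumes h_meas: "\<And>v. (\<lambda>m. h m v) \<in> borel_measurable M" and h_cont: "\<And>m. continuous_on UNIV (h m)"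
    and x: "x \<in> borel_measurable M"
  shows "(\<lambda>m. h m (x m)) \<in> borel_measurable M"
proof (rule borel_measurable_LIMSEQ_real[where u="\<lambda>n m. h m (of_int \<lfloor>real (Suc n) * x m\<rfloor> / real (Suc n))"])
  fix m
  have "isCont (h m) (x m)" using h_cont[of m] by (simp add: continuous_on_eq_continuous_at)
  then show "(\<lambda>n. h m (of_int \<lfloor>real (Suc n) * x m\<rfloor> / real (Suc n))) \<longlonglongrightarrow> h m (x m)"
    by (rule isCont_tendsto_compose) (rule LIMSEQ_floor_grid)
next
  fix n
  have "(\<lambda>m. \<lfloor>real (Suc n) * x m\<rfloor>) \<in> measurable M (count_space UNIV)"
    using x by measurable
  then show "(\<lambda>m. h m (of_int \<lfloor>real (Suc n) * x m\<rfloor> / real (Suc n))) \<in> borel_measurable M"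
    using measurable_compose_countable[where f="\<lambda>(k::int) m. h m (of_int k / real (Suc n))"] h_meas
    by simp
qed

lemma borel_measurable_LBINT_parametric:
  fixes F :: "real \<Rightarrow> real \<Rightarrow> real"
  assumes "(\<lambda>p. F (fst p) (snd p)) \<in> borel_measurable borel"
  shows "(\<lambda>r. LBINT x=a..b. F r x) \<in> borel_measurable borel"
proof -
  have m: "(\<lambda>r. \<integral>x. indicator A x *\<^sub>R F r x \<partial>lborel) \<in> borel_measurable borel"
    if "A \<in> sets borel" for A
  proof -
    have "(\<lambda>p::real \<times> real. indicator A (snd p) :: real) \<in> borel_measurable borel"
      using measurable_compose[OF measurable_snd borel_measurable_indicator[OF that]]
      by (simp add: comp_def borel_prod[symmetric])
    then have "(\<lambda>p. indicator A (snd p) *\<^sub>R F (fst p) (snd p)) \<in> borel_measurable (lborel \<Otimes>\<^sub>M lborel)"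
      unfolding lborel_prod using assms by (simp add: borel_measurable_scaleR)
    then show ?thesis
      using lborel.borel_measurable_lebesgue_integral[of "\<lambda>r x. indicator A x *\<^sub>R F r x" lborel] by simp
  qed
  show ?thesis
    unfolding interval_lebesgue_integral_def set_lebesgue_integral_def
    using m[OF borel_einterval[of a b]] m[OF borel_einterval[of b a]] by (cases "a \<le> b") simp_all
qed

lemma AE_has_real_derivative_measurable:
  fixes \<Phi> :: "real \<Rightarrow> real \<Rightarrow> real"
  assumes \<delta>: "\<delta> > 0" and meas: "\<And>s. \<bar>s - t\<bar> < \<delta> \<Longrightarrow> (\<lambda>r. \<Phi> r s) \<in> borel_measurable M"
    and diff: "AE r in M. \<exists>d. (\<Phi> r has_real_derivative d) (at t)"
  obtains D where "D \<in> borel_measurable M" "AE r in M. (\<Phi> r has_real_derivative D r) (at t)"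
proof -
  define h where "h n = \<delta> / (real n + 2)" for n
  have h: "h n \<noteq> 0" "\<bar>h n\<bar> < \<delta>" for n
    using \<delta> by (auto simp: h_def field_simps add_pos_nonneg)
  have "LIM n sequentially. real n + 2 :> at_infinity"
    using filterlim_tendsto_add_at_top[OF tendsto_const filterlim_real_sequentially, of 2]
    by (simp add: add.commute filterlim_at_top_imp_at_infinity)
  then have "h \<longlonglongrightarrow> 0" unfolding h_def by (rule tendsto_divide_0[OF tendsto_const])
  define D where "D r = lim (\<lambda>n. (\<Phi> r (t + h n) - \<Phi> r t) / h n)" for r
  have "(\<lambda>r. (\<Phi> r (t + h n) - \<Phi> r t) / h n) \<in> borel_measurable M" for n
    using h[of n] \<delta> by (intro borel_measurable_divide borel_measurable_diff meas) auto
  then have "D \<in> borel_measurable M" unfolding D_def by (rule borel_measurable_lim_metric)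
  moreover have "AE r in M. (\<Phi> r has_real_derivative D r) (at t)"
    using diff
  proof eventually_elim
    case (elim r)
    then obtain d where d: "(\<Phi> r has_real_derivative d) (at t)" by blast
    then have "(\<lambda>n. (\<Phi> r (t + h n) - \<Phi> r t) / h n) \<longlonglongrightarrow> d"
      by (rule has_real_derivative_diff_quotients_tendsto[OF _ h(1) \<open>h \<longlonglongrightarrow> 0\<close>])
    then show ?case using d by (simp add: D_def limI)
  qed
  ultimately show ?thesis by (rule that)
qed

text \<open>Unlike \<open>leibniz_rule\<close>, this needs differentiability of the integrand only almost
  everywhere, with a Lipschitz bound in place of continuity of the derivative.\<close>

lemma has_real_derivative_integral_lipschitz:
  fixes \<Phi> :: "real \<Rightarrow> real \<Rightarrow> real" and W :: "real \<Rightarrow> real"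
  assumes \<delta>: "\<delta> > 0"
    and meas: "\<And>s. \<bar>s - t\<bar> < \<delta> \<Longrightarrow> (\<lambda>r. \<Phi> r s) \<in> borel_measurable lborel"
    and W: "integrable lborel W" and int_t: "integrable lborel (\<lambda>r. \<Phi> r t)"
    and lip: "\<And>r s. \<bar>s - t\<bar> < \<delta> \<Longrightarrow> \<bar>\<Phi> r s - \<Phi> r t\<bar> \<le> W r * \<bar>s - t\<bar>"
    and diff: "AE r in lborel. \<exists>d. (\<Phi> r has_real_derivative d) (at t)"
  obtains D where "integrable lborel D" "AE r in lborel. (\<Phi> r has_real_derivative D r) (at t)"
    "((\<lambda>s. \<integral>r. \<Phi> r s \<partial>lborel) has_real_derivative (\<integral>r. D r \<partial>lborel)) (at t)"
proof -
  obtain D where D_meas: "D \<in> borel_measurable lborel"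
    and D: "AE r in lborel. (\<Phi> r has_real_derivative D r) (at t)"
    using AE_has_real_derivative_measurable[OF \<delta> meas diff] by blast
  have "AE r in lborel. norm (D r) \<le> norm (W r)"
    using D by eventually_elim (auto intro: order_trans[OF has_real_derivative_abs_le_if_lipschitz[OF _ \<delta> lip]])
  then have D_int: "integrable lborel D" by (rule Bochner_Integration.integrable_bound[OF W D_meas])
  define Q where "Q h r = (\<Phi> r (t + h) - \<Phi> r t) / h" for h r
  have Q_meas: "Q h \<in> borel_measurable lborel" if "\<bar>h\<bar> < \<delta>" for h
    unfolding Q_def[abs_def] using that \<delta> by (intro borel_measurable_divide borel_measurable_diff meas) auto
  have Q_bound: "norm (Q h r) \<le> W r" if "h \<noteq> 0" "\<bar>h\<bar> < \<delta>" for h r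
    using lip[of "t + h" r] that by (simp add: Q_def abs_divide divide_le_eq)
  have integral_Q: "(\<integral>r. Q h r \<partial>lborel) = ((\<integral>r. \<Phi> r (t + h) \<partial>lborel) - (\<integral>r. \<Phi> r t \<partial>lborel)) / h"
    if "h \<noteq> 0" "\<bar>h\<bar> < \<delta>" for h
  proof -
    have "integrable lborel (Q h)"
      using W Q_meas[OF that(2)] by (rule Bochner_Integration.integrable_bound)
        (use Q_bound[OF that] in \<open>auto intro!: AE_I2 order_trans[OF _ abs_ge_self]\<close>)
    moreover have "(\<lambda>r. \<Phi> r (t + h)) = (\<lambda>r. \<Phi> r t + h * Q h r)" using that by (auto simp: Q_def)
    ultimately show ?thesis using int_t that by simp
  qed
  have at_ball: "at (0::real) within ball 0 \<delta> = at 0" using \<delta> by (intro at_within_open) auto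
  have "((\<lambda>h. ((\<integral>r. \<Phi> r (t + h) \<partial>lborel) - (\<integral>r. \<Phi> r t \<partial>lborel)) / h) \<longlongrightarrow> (\<integral>r. D r \<partial>lborel))
      (at 0 within ball 0 \<delta>)"
    unfolding tendsto_at_iff_sequentially comp_def
  proof (intro allI impI)
    fix X :: "nat \<Rightarrow> real" assume X: "\<forall>i. X i \<in> ball 0 \<delta> - {0}" "X \<longlonglongrightarrow> 0"
    then have X': "X i \<noteq> 0" "\<bar>X i\<bar> < \<delta>" for i by auto
    have "AE r in lborel. (\<lambda>n. Q (X n) r) \<longlonglongrightarrow> D r"
      using D by eventually_elim (use has_real_derivative_diff_quotients_tendsto X'(1) X(2) in \<open>auto simp: Q_def\<close>)
    then have "(\<lambda>n. \<integral>r. Q (X n) r \<partial>lborel) \<longlonglongrightarrow> (\<integral>r. D r \<partial>lborel)"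
      by (rule integral_dominated_convergence[OF D_meas Q_meas[OF X'(2)] W]) (use Q_bound X' in auto)
    then show "(\<lambda>n. ((\<integral>r. \<Phi> r (t + X n) \<partial>lborel) - (\<integral>r. \<Phi> r t \<partial>lborel)) / X n) \<longlonglongrightarrow> (\<integral>r. D r \<partial>lborel)"
      by (simp add: integral_Q[OF X'])
  qed
  then have "((\<lambda>s. \<integral>r. \<Phi> r s \<partial>lborel) has_real_derivative (\<integral>r. D r \<partial>lborel)) (at t)"
    unfolding at_ball DERIV_def .
  with D_int D show ?thesis by (rule that)
qed

section \<open>The space W11\<close>

lemma W11_integral_representation:
  fixes u :: "real \<Rightarrow> real"
  assumes "W11 T u"
  obtains v where "v integrable_on {0..T}" "\<And>t. t \<in> {0..T} \<Longrightarrow> u t = u 0 + integral {0..t} v"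
    "AE t in lborel. t \<in> {0<..<T} \<longrightarrow> (u has_real_derivative v t) (at t)"
proof -
  obtain v where v: "set_integrable lborel {0..T} v" "\<forall>t\<in>{0..T}. u t = u 0 + (LINT s:{0..t}|lborel. v s)"
    using assms unfolding W11_def by blast
  have int: "v integrable_on {0..T}" using set_borel_integral_eq_integral(1)[OF v(1)] .
  have repr: "u t = u 0 + integral {0..t} v" if "t \<in> {0..T}" for t
  proof -
    have "set_integrable lborel {0..t} v" using that by (intro set_integrable_subset[OF v(1)]) auto
    then have "(LINT s:{0..t}|lborel. v s) = integral {0..t} v" by (rule set_borel_integral_eq_integral(2))
    moreover have "u t = u 0 + (LINT s:{0..t}|lborel. v s)" using v(2) that by blast
    ultimately show ?thesis by linarith
  qed
  have "AE t in lborel. t \<in> {0<..<T} \<longrightarrow> (u has_real_derivative v t) (at t)"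
    using indefinite_integral_has_real_derivative_ae[OF int]
  proof eventually_elim
    case (elim t)
    show ?case
    proof
      assume t: "t \<in> {0<..<T}"
      have "((\<lambda>s. u 0 + integral {0..s} v) has_real_derivative v t) (at t)"
        using DERIV_add[OF DERIV_const, of "\<lambda>s. integral {0..s} v"] elim t by simp
      then show "(u has_real_derivative v t) (at t)"
        by (rule has_field_derivative_transform_within_open[where S="{0<..<T}"])
          (use t in \<open>auto intro: repr[symmetric]\<close>)
    qed
  qed
  with int repr show ?thesis by (rule that)
qed

lemma W11_continuous_on:
  fixes u :: "real \<Rightarrow> real"
  assumes "W11 T u"
  shows "continuous_on {0..T} u"
proof -
  obtain v where v: "v integrable_on {0..T}" "\<And>t. t \<in> {0..T} \<Longrightarrow> u t = u 0 + integral {0..t} v"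
    using W11_integral_representation[OF assms] by blast
  have "continuous_on {0..T} (\<lambda>t. u 0 + integral {0..t} v)"
    using indefinite_integral_continuous_1[OF v(1)] by (intro continuous_intros)
  then show ?thesis by (rule continuous_on_eq) (metis v(2))
qed

lemma W11_differentiable_ae:
  fixes u :: "real \<Rightarrow> real"
  assumes "W11 T u"
  shows "AE t in lborel. t \<in> {0<..<T} \<longrightarrow> (\<exists>d. (u has_real_derivative d) (at t))"
proof -
  obtain v where "AE t in lborel. t \<in> {0<..<T} \<longrightarrow> (u has_real_derivative v t) (at t)"
    using W11_integral_representation[OF assms] by blast
  then show ?thesis by eventually_elim blast
qed

section \<open>The play operator\<close>

lemma play_solution_velocity:
  assumes "play_solution T r q \<xi>"
  obtains v where "v integrable_on {0..T}" "\<And>t. t \<in> {0..T} \<Longrightarrow> \<xi> t = \<xi> 0 + integral {0..t} v"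
    "AE t in lborel. t \<in> {0<..<T} \<longrightarrow> (q t - \<xi> t < r \<longrightarrow> v t \<le> 0) \<and> (- r < q t - \<xi> t \<longrightarrow> 0 \<le> v t)"
proof -
  have W: "W11 T \<xi>" and ae: "AE t in lborel. t \<in> {0<..<T} \<longrightarrow>
      (\<exists>d. (\<xi> has_real_derivative d) (at t) \<and> (\<forall>z. \<bar>z\<bar> \<le> 1 \<longrightarrow> d * (q t - \<xi> t - r * z) \<ge> 0))"
    using assms unfolding play_solution_def by auto
  obtain v where v: "v integrable_on {0..T}" "\<And>t. t \<in> {0..T} \<Longrightarrow> \<xi> t = \<xi> 0 + integral {0..t} v"
    "AE t in lborel. t \<in> {0<..<T} \<longrightarrow> (\<xi> has_real_derivative v t) (at t)"
    using W11_integral_representation[OF W] by blast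
  have "AE t in lborel. t \<in> {0<..<T} \<longrightarrow> (q t - \<xi> t < r \<longrightarrow> v t \<le> 0) \<and> (- r < q t - \<xi> t \<longrightarrow> 0 \<le> v t)"
    using ae v(3)
  proof eventually_elim
    case (elim t)
    show ?case
    proof
      assume t: "t \<in> {0<..<T}"
      then obtain d where d: "(\<xi> has_real_derivative d) (at t)"
        "\<And>z. \<bar>z\<bar> \<le> 1 \<Longrightarrow> d * (q t - \<xi> t - r * z) \<ge> 0"
        using elim(1) by blast
      have "d = v t" using DERIV_unique[OF d(1)] elim(2) t by blast
      then show "(q t - \<xi> t < r \<longrightarrow> v t \<le> 0) \<and> (- r < q t - \<xi> t \<longrightarrow> 0 \<le> v t)"
        using d(2)[of 1] d(2)[of "-1"] by (auto simp: mult_le_0_iff zero_le_mult_iff)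
    qed
  qed
  with v(1,2) show ?thesis by (rule that)
qed

lemma play_solution_continuous_on: "play_solution T r q \<xi> \<Longrightarrow> continuous_on {0..T} \<xi>"
  unfolding play_solution_def by (blast intro: W11_continuous_on)

lemma play_solution_bound: "play_solution T r q \<xi> \<Longrightarrow> t \<in> {0..T} \<Longrightarrow> \<bar>q t - \<xi> t\<bar> \<le> r"
  unfolding play_solution_def by blast

lemma play_solution_initial: "play_solution T r q \<xi> \<Longrightarrow> \<xi> 0 = max (q 0 - r) (min 0 (q 0 + r))"
  unfolding play_solution_def by blast

lemma play_antimono_below_threshold:
  assumes P: "play_solution T r q \<xi>" and "0 \<le> a" "a \<le> b" "b \<le> T"
    and below: "\<And>u. u \<in> {a<..<b} \<Longrightarrow> q u - \<xi> u < r"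
  shows "\<xi> b \<le> \<xi> a"
proof -
  obtain v where v: "v integrable_on {0..T}" "\<And>t. t \<in> {0..T} \<Longrightarrow> \<xi> t = \<xi> 0 + integral {0..t} v"
    "AE t in lborel. t \<in> {0<..<T} \<longrightarrow> (q t - \<xi> t < r \<longrightarrow> v t \<le> 0) \<and> (- r < q t - \<xi> t \<longrightarrow> 0 \<le> v t)"
    using play_solution_velocity[OF P] by blast
  have "integral {a..b} v \<le> 0"
  proof (rule integral_nonpos_AE)
    show "v integrable_on {a..b}" using assms by (intro integrable_subinterval_real[OF v(1)]) auto
    show "AE x in lborel. x \<in> {a<..<b} \<longrightarrow> v x \<le> 0"
      using v(3) by eventually_elim (use assms below in auto)
  qed
  then show ?thesis using integral_representation_increment[OF v(1,2) assms(2-4)] by simp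
qed

lemma play_mono_above_threshold:
  assumes P: "play_solution T r q \<xi>" and "0 \<le> a" "a \<le> b" "b \<le> T"
    and above: "\<And>u. u \<in> {a<..<b} \<Longrightarrow> - r < q u - \<xi> u"
  shows "\<xi> a \<le> \<xi> b"
proof -
  obtain v where v: "v integrable_on {0..T}" "\<And>t. t \<in> {0..T} \<Longrightarrow> \<xi> t = \<xi> 0 + integral {0..t} v"
    "AE t in lborel. t \<in> {0<..<T} \<longrightarrow> (q t - \<xi> t < r \<longrightarrow> v t \<le> 0) \<and> (- r < q t - \<xi> t \<longrightarrow> 0 \<le> v t)"
    using play_solution_velocity[OF P] by blast
  have "integral {a..b} (\<lambda>x. - v x) \<le> 0"
  proof (rule integral_nonpos_AE)
    show "(\<lambda>x. - v x) integrable_on {a..b}"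
      using assms by (intro integrable_neg integrable_subinterval_real[OF v(1)]) auto
    show "AE x in lborel. x \<in> {a<..<b} \<longrightarrow> - v x \<le> 0"
      using v(3) by eventually_elim (use assms above in auto)
  qed
  then show ?thesis using integral_representation_increment[OF v(1,2) assms(2-4)] by simp
qed

text \<open>Pointwise form of the play inequality: it holds at every point where the output is
  differentiable, not only almost everywhere.\<close>

lemma play_derivative_sign:
  assumes P: "play_solution T r q \<xi>" and r: "r > 0" and q: "continuous_on {0..T} q"
    and t: "t \<in> {0<..<T}" and d: "(\<xi> has_real_derivative d) (at t)"
  shows "d * (q t - \<xi> t) \<ge> 0"
proof (cases "q t - \<xi> t = 0")
  case False
  have "continuous_on {0..T} (\<lambda>u. q u - \<xi> u)"
    by (intro continuous_intros q play_solution_continuous_on[OF P])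
  then obtain \<delta> where \<delta>: "\<delta> > 0"
    "\<And>u. u \<in> {0..T} \<Longrightarrow> dist u t < \<delta> \<Longrightarrow> dist (q u - \<xi> u) (q t - \<xi> t) < \<bar>q t - \<xi> t\<bar>"
    using t False unfolding continuous_on_iff by (metis atLeastAtMost_iff greaterThanLessThan_iff
        less_eq_real_def zero_less_abs_iff)
  define \<delta>' where "\<delta>' = min \<delta> (T - t)"
  have \<delta>': "\<delta>' > 0" using \<delta> t by (simp add: \<delta>'_def)
  have near: "u \<in> {0..T}" "dist u t < \<delta>" if "u \<in> {t<..<t + h}" "h < \<delta>'" for u h
    using that t by (auto simp: \<delta>'_def dist_real_def)
  show ?thesis
  proof (cases "q t - \<xi> t > 0")
    case True
    have "d \<ge> 0"
    proof (rule has_real_derivative_nonneg_if_right_mono[OF d \<delta>'])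
      fix h assume h: "0 < h" "h < \<delta>'"
      show "\<xi> t \<le> \<xi> (t + h)"
      proof (rule play_mono_above_threshold[OF P])
        fix u assume "u \<in> {t<..<t + h}"
        from \<delta>(2)[OF near[OF this h(2)]] True r show "- r < q u - \<xi> u"
          by (auto simp: dist_real_def)
      qed (use t h in \<open>auto simp: \<delta>'_def\<close>)
    qed
    then show ?thesis using True by simp
  next
    case False
    have "- d \<ge> 0"
    proof (rule has_real_derivative_nonneg_if_right_mono[OF DERIV_minus[OF d] \<delta>'])
      fix h assume h: "0 < h" "h < \<delta>'"
      have "\<xi> (t + h) \<le> \<xi> t"
      proof (rule play_antimono_below_threshold[OF P])
        fix u assume "u \<in> {t<..<t + h}"
        from \<delta>(2)[OF near[OF this h(2)]] False \<open>q t - \<xi> t \<noteq> 0\<close> r show "q u - \<xi> u < r"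
          by (auto simp: dist_real_def)
      qed (use t h in \<open>auto simp: \<delta>'_def\<close>)
      then show "- \<xi> t \<le> - \<xi> (t + h)" by simp
    qed
    then show ?thesis using False by (simp add: mult_nonpos_nonpos)
  qed
qed simp

lemma play_increment_le:
  assumes P: "play_solution T r q \<xi>" and ts: "0 \<le> t" "t \<le> s" "s \<le> T"
    and K: "\<And>u. u \<in> {t..s} \<Longrightarrow> \<bar>q u - q t\<bar> \<le> K"
  shows "\<bar>\<xi> s - \<xi> t\<bar> \<le> K"
proof -
  have K0: "K \<ge> 0" using K[of t] ts by auto
  have qt: "\<bar>q t - \<xi> t\<bar> \<le> r" using ts by (intro play_solution_bound[OF P]) auto
  have cont: "continuous_on {t..s} \<xi>"
    using ts by (intro continuous_on_subset[OF play_solution_continuous_on[OF P]]) auto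
  have up: "\<xi> s \<le> max (\<xi> t) (q t + K - r)"
  proof (rule continuous_on_barrier[OF ts(2) cont])
    fix t0 u assume a: "t \<le> t0" "t0 < u" "u \<le> s" "\<forall>x\<in>{t0<..u}. max (\<xi> t) (q t + K - r) < \<xi> x"
    show "\<xi> u \<le> \<xi> t0"
    proof (rule play_antimono_below_threshold[OF P])
      fix x assume x: "x \<in> {t0<..<u}"
      then have "max (\<xi> t) (q t + K - r) < \<xi> x" using a(4) by auto
      moreover have "\<bar>q x - q t\<bar> \<le> K" using x a by (intro K) auto
      ultimately show "q x - \<xi> x < r" by linarith
    qed (use a ts in auto)
  qed simp
  have down: "- \<xi> s \<le> max (- \<xi> t) (K - q t - r)"
  proof (rule continuous_on_barrier[OF ts(2)])
    show "continuous_on {t..s} (\<lambda>x. - \<xi> x)" by (intro continuous_intros cont)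
    fix t0 u assume a: "t \<le> t0" "t0 < u" "u \<le> s" "\<forall>x\<in>{t0<..u}. max (- \<xi> t) (K - q t - r) < - \<xi> x"
    have "\<xi> t0 \<le> \<xi> u"
    proof (rule play_mono_above_threshold[OF P])
      fix x assume x: "x \<in> {t0<..<u}"
      then have "max (- \<xi> t) (K - q t - r) < - \<xi> x" using a(4) by auto
      moreover have "\<bar>q x - q t\<bar> \<le> K" using x a by (intro K) auto
      ultimately show "- r < q x - \<xi> x" by linarith
    qed (use a ts in auto)
    then show "- \<xi> u \<le> - \<xi> t0" by simp
  qed simp
  show ?thesis using up down qt K0 by (auto simp: max_def abs_le_iff split: if_splits)
qed

lemma play_local_lipschitz:
  assumes P: "play_solution T r q \<xi>" and "C \<ge> 0"
    and q_lip: "\<And>u. \<bar>u - t\<bar> < \<delta> \<Longrightarrow> \<bar>q u - q t\<bar> \<le> C * \<bar>u - t\<bar>"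
    and st: "s \<in> {0..T}" "t \<in> {0..T}" "\<bar>s - t\<bar> < \<delta>"
  shows "\<bar>\<xi> s - \<xi> t\<bar> \<le> 2 * C * \<bar>s - t\<bar>"
proof (cases "t \<le> s")
  case True
  have "\<bar>\<xi> s - \<xi> t\<bar> \<le> C * (s - t)"
  proof (rule play_increment_le[OF P])
    fix u assume u: "u \<in> {t..s}"
    then have "\<bar>q u - q t\<bar> \<le> C * \<bar>u - t\<bar>" using q_lip[of u] st by auto
    also have "\<dots> \<le> C * (s - t)" using u \<open>C \<ge> 0\<close> by (intro mult_left_mono) auto
    finally show "\<bar>q u - q t\<bar> \<le> C * (s - t)" .
  qed (use st True in auto)
  then show ?thesis using True \<open>C \<ge> 0\<close> by simp
next
  case False
  have "\<bar>\<xi> t - \<xi> s\<bar> \<le> 2 * C * (t - s)"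
  proof (rule play_increment_le[OF P])
    fix u assume u: "u \<in> {s..t}"
    have "\<bar>q u - q t\<bar> \<le> C * \<bar>u - t\<bar>" "\<bar>q s - q t\<bar> \<le> C * \<bar>s - t\<bar>"
      using q_lip[of u] q_lip[of s] u st False by auto
    moreover have "C * \<bar>u - t\<bar> \<le> C * (t - s)" "C * \<bar>s - t\<bar> \<le> C * (t - s)"
      using u False \<open>C \<ge> 0\<close> by (auto intro!: mult_left_mono)
    ultimately show "\<bar>q u - q s\<bar> \<le> 2 * C * (t - s)" by linarith
  qed (use st False in auto)
  then show ?thesis using False by (simp add: abs_minus_commute)
qed

lemma play_abs_le:
  assumes P: "play_solution T r q \<xi>" and "r > 0" and q: "\<And>u. u \<in> {0..T} \<Longrightarrow> \<bar>q u\<bar> \<le> M"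
    and t: "t \<in> {0..T}"
  shows "\<bar>\<xi> t\<bar> \<le> 3 * M"
proof -
  have "\<bar>\<xi> t - \<xi> 0\<bar> \<le> 2 * M"
  proof (rule play_increment_le[OF P])
    fix u assume "u \<in> {0..t}"
    then have "\<bar>q u\<bar> \<le> M" "\<bar>q 0\<bar> \<le> M" using t by (auto intro!: q)
    then show "\<bar>q u - q 0\<bar> \<le> 2 * M" by linarith
  qed (use t in auto)
  moreover have "\<bar>\<xi> 0\<bar> \<le> \<bar>q 0\<bar>"
    using play_solution_initial[OF P] \<open>r > 0\<close> by (simp add: max_def min_def abs_if)
  moreover have "\<bar>q 0\<bar> \<le> M" using t by (intro q) auto
  ultimately show ?thesis by linarith
qed

lemma play_threshold_lipschitz_le:
  assumes P1: "play_solution T r1 q \<xi>1" and P2: "play_solution T r2 q \<xi>2"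
    and r: "r1 > 0" "r2 > 0" and t: "t \<in> {0..T}"
  shows "\<xi>1 t - \<xi>2 t \<le> \<bar>r1 - r2\<bar>"
proof (rule continuous_on_barrier[where w="\<lambda>x. \<xi>1 x - \<xi>2 x"])
  show "continuous_on {0..t} (\<lambda>x. \<xi>1 x - \<xi>2 x)"
    using t by (intro continuous_intros continuous_on_subset[OF play_solution_continuous_on[OF P1]]
        continuous_on_subset[OF play_solution_continuous_on[OF P2]]) auto
  show "\<xi>1 0 - \<xi>2 0 \<le> \<bar>r1 - r2\<bar>"
    using play_solution_initial[OF P1] play_solution_initial[OF P2] r by (simp add: max_def min_def abs_if)
  fix t0 u assume a: "0 \<le> t0" "t0 < u" "u \<le> t" "\<forall>x\<in>{t0<..u}. \<bar>r1 - r2\<bar> < \<xi>1 x - \<xi>2 x"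
  have "\<xi>1 u \<le> \<xi>1 t0"
  proof (rule play_antimono_below_threshold[OF P1])
    fix x assume x: "x \<in> {t0<..<u}"
    then have "\<bar>r1 - r2\<bar> < \<xi>1 x - \<xi>2 x" using a(4) by auto
    moreover have "\<bar>q x - \<xi>2 x\<bar> \<le> r2" using x a t by (intro play_solution_bound[OF P2]) auto
    ultimately show "q x - \<xi>1 x < r1" by (simp add: abs_le_iff abs_if split: if_splits)
  qed (use a t in auto)
  moreover have "\<xi>2 t0 \<le> \<xi>2 u"
  proof (rule play_mono_above_threshold[OF P2])
    fix x assume x: "x \<in> {t0<..<u}"
    then have "\<bar>r1 - r2\<bar> < \<xi>1 x - \<xi>2 x" using a(4) by auto
    moreover have "\<bar>q x - \<xi>1 x\<bar> \<le> r1" using x a t by (intro play_solution_bound[OF P1]) auto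
    ultimately show "- r2 < q x - \<xi>2 x" by (simp add: abs_le_iff abs_if split: if_splits)
  qed (use a t in auto)
  ultimately show "\<xi>1 u - \<xi>2 u \<le> \<xi>1 t0 - \<xi>2 t0" by simp
qed (use t in auto)

lemma play_threshold_lipschitz:
  assumes "play_solution T r1 q \<xi>1" "play_solution T r2 q \<xi>2" "r1 > 0" "r2 > 0" "t \<in> {0..T}"
  shows "\<bar>\<xi>1 t - \<xi>2 t\<bar> \<le> \<bar>r1 - r2\<bar>"
  using play_threshold_lipschitz_le[OF assms] play_threshold_lipschitz_le[OF assms(2,1,4,3,5)]
  by (simp add: abs_le_iff abs_minus_commute)

section \<open>Families of plays\<close>

lemma play_family_continuous_on:
  assumes plays: "\<And>r. r > 0 \<Longrightarrow> play_solution T r q (xi r)"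
  shows "continuous_on ({0<..} \<times> {0..T}) (\<lambda>p. xi (fst p) (snd p))"
  unfolding continuous_on_iff
proof (intro ballI allI impI)
  fix p0 :: "real \<times> real" and e :: real
  assume p0: "p0 \<in> {0<..} \<times> {0..T}" and e: "e > 0"
  obtain r0 t0 where rt0: "p0 = (r0, t0)" "r0 > 0" "t0 \<in> {0..T}" using p0 by auto
  obtain d where d: "d > 0" "\<And>t. t \<in> {0..T} \<Longrightarrow> dist t t0 < d \<Longrightarrow> dist (xi r0 t) (xi r0 t0) < e / 2"
    using play_solution_continuous_on[OF plays[OF rt0(2)]] rt0(3) e
    unfolding continuous_on_iff by (metis half_gt_zero)
  show "\<exists>d>0. \<forall>p\<in>{0<..} \<times> {0..T}. dist p p0 < d \<longrightarrow> dist (xi (fst p) (snd p)) (xi (fst p0) (snd p0)) < e"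
  proof (intro exI[of _ "min d (e/2)"] conjI ballI impI)
    fix p assume p: "p \<in> {0<..} \<times> {0..T}" "dist p p0 < min d (e / 2)"
    obtain r t where rt: "p = (r, t)" "r > 0" "t \<in> {0..T}" using p(1) by auto
    have "\<bar>r - r0\<bar> < e / 2" "dist t t0 < d"
      using dist_fst_le[of p p0] dist_snd_le[of p p0] p(2) rt rt0 by (auto simp: dist_real_def)
    moreover have "\<bar>xi r t - xi r0 t\<bar> \<le> \<bar>r - r0\<bar>"
      by (rule play_threshold_lipschitz[OF plays plays rt(2) rt0(2) rt(3)]) (use rt rt0 in auto)
    ultimately show "dist (xi (fst p) (snd p)) (xi (fst p0) (snd p0)) < e"
      using d(2)[OF rt(3)] rt rt0 abs_triangle_ineq[of "xi r t - xi r0 t" "xi r0 t - xi r0 t0"]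
      by (auto simp: dist_real_def)
  qed (use d e in auto)
qed

lemma play_family_measurable:
  assumes plays: "\<And>r. r > 0 \<Longrightarrow> play_solution T r q (xi r)"
  shows "(\<lambda>p. if 0 < fst p \<and> snd p \<in> {0..T} then xi (fst p) (snd p) else 0) \<in> borel_measurable borel"
proof -
  have "{0<..} \<times> {0..T} = ({0<..} \<times> UNIV) \<inter> (UNIV \<times> {0..T::real})" by auto
  also have "\<dots> \<in> sets (borel :: (real \<times> real) measure)"
    by (intro sets.Int borel_open borel_closed open_Times closed_Times) auto
  finally have "{0<..} \<times> {0..T} \<in> sets (borel :: (real \<times> real) measure)" .
  then have "(\<lambda>p. if p \<in> {0<..} \<times> {0..T} then xi (fst p) (snd p) else 0) \<in> borel_measurable borel"
    by (rule borel_measurable_continuous_on_if[OF _ play_family_continuous_on[OF plays]]) auto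
  then show ?thesis by (simp add: mem_Times_iff)
qed

text \<open>The rational characterisation of differentiability makes the set of good pairs \<open>(r, t)\<close>
  Borel, so that Fubini's theorem applies.\<close>

lemma play_family_rat_diff_quotients_Cauchy_ae:
  assumes plays: "\<And>r. r > 0 \<Longrightarrow> play_solution T r q (xi r)"
    and X_def: "\<And>r s. X r s = (if 0 < r \<and> s \<in> {0..T} then xi r s else 0)"
  shows "AE t in lborel. AE r in lborel. r > 0 \<longrightarrow> t \<in> {0<..<T} \<longrightarrow> rat_diff_quotients_Cauchy (X r) t"
proof -
  define P where "P r t \<longleftrightarrow> r > 0 \<longrightarrow> t \<in> {0<..<T} \<longrightarrow> rat_diff_quotients_Cauchy (X r) t" for r t
  have "open {p :: real \<times> real. 0 < fst p}" by (intro open_Collect_less continuous_intros)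
  moreover have "open (UNIV \<times> {0<..<T})" by (intro open_Times) auto
  moreover have "{p. rat_diff_quotients_Cauchy (X (fst p)) (snd p)} \<in> sets borel"
    unfolding X_def by (intro rat_diff_quotients_Cauchy_measurable play_family_measurable[OF plays])
  ultimately have "- {p. 0 < fst p} \<union> - (UNIV \<times> {0<..<T}) \<union> {p. rat_diff_quotients_Cauchy (X (fst p)) (snd p)}
      \<in> sets borel"
    by (intro sets.Un borel_comp[OF borel_open])
  also have "- {p. 0 < fst p} \<union> - (UNIV \<times> {0<..<T}) \<union> {p. rat_diff_quotients_Cauchy (X (fst p)) (snd p)}
      = {p::real \<times> real. P (fst p) (snd p)}"
    by (auto simp: P_def)
  finally have "{x \<in> space (lborel \<Otimes>\<^sub>M lborel). P (fst x) (snd x)} \<in> sets (lborel \<Otimes>\<^sub>M lborel)"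
    unfolding lborel_prod by simp
  moreover have "AE t in lborel. P r t" for r
  proof (cases "r > 0")
    case True
    have "AE t in lborel. t \<in> {0<..<T} \<longrightarrow> (\<exists>d. (xi r has_real_derivative d) (at t))"
      using plays[OF True] unfolding play_solution_def by (elim conjE eventually_mono) blast
    then show ?thesis
    proof eventually_elim
      case (elim t)
      show ?case unfolding P_def
      proof (intro impI)
        assume t: "t \<in> {0<..<T}"
        then obtain d where "(xi r has_real_derivative d) (at t)" using elim by blast
        then have "(X r has_real_derivative d) (at t)"
          by (rule has_field_derivative_transform_within_open[where S="{0<..<T}"]) (use t True X_def in auto)
        then show "rat_diff_quotients_Cauchy (X r) t"
          by (rule has_real_derivative_imp_rat_diff_quotients_Cauchy)
      qed
    qed
  qed (simp add: P_def)
  ultimately have "AE t in lborel. AE r in lborel. P r t" using lborel_pair.AE_commute by blast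
  then show ?thesis by (simp add: P_def)
qed

lemma play_family_differentiable_ae:
  assumes plays: "\<And>r. r > 0 \<Longrightarrow> play_solution T r q (xi r)"
  shows "AE t in lborel. t \<in> {0<..<T} \<longrightarrow> (AE r in lborel. r > 0 \<longrightarrow> (\<exists>d. (xi r has_real_derivative d) (at t)))"
proof -
  define X where "X r s = (if 0 < r \<and> s \<in> {0..T} then xi r s else 0)" for r s
  have X_eq: "X r s = xi r s" if "r > 0" "s \<in> {0<..<T}" for r s using that by (simp add: X_def)
  have "AE t in lborel. AE r in lborel. r > 0 \<longrightarrow> t \<in> {0<..<T} \<longrightarrow> rat_diff_quotients_Cauchy (X r) t"
    by (rule play_family_rat_diff_quotients_Cauchy_ae[OF plays X_def])
  then show ?thesis
  proof (eventually_elim, intro impI)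
    case (elim t)
    assume t: "t \<in> {0<..<T}"
    show "AE r in lborel. r > 0 \<longrightarrow> (\<exists>d. (xi r has_real_derivative d) (at t))"
      using elim
    proof (eventually_elim, intro impI)
      case (elim r)
      assume r: "r > 0"
      have "continuous_on {0<..<T} (X r)"
        using continuous_on_subset[OF play_solution_continuous_on[OF plays[OF r]]]
        by (rule continuous_on_eq) (auto simp: X_eq[OF r])
      then have near: "isCont (X r) x" if "\<bar>x - t\<bar> < min t (T - t)" for x
        using that by (simp add: continuous_on_eq_continuous_at abs_less_iff)
      have "min t (T - t) > 0" using t by simp
      then obtain d where "(X r has_real_derivative d) (at t)"
        using rat_diff_quotients_Cauchy_imp_differentiable[OF near] elim r t by blast
      then have "(xi r has_real_derivative d) (at t)"
        by (rule has_field_derivative_transform_within_open[where S="{0<..<T}"]) (use t r X_eq in auto)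
      then show "\<exists>d. (xi r has_real_derivative d) (at t)" ..
    qed
  qed
qed

lemma play_family_local_regularity:
  assumes plays: "\<And>r. r > 0 \<Longrightarrow> play_solution T r q (xi r)"
    and q_cont: "continuous_on {0..T} q" and t: "t \<in> {0<..<T}"
    and q_deriv: "(q has_real_derivative dq) (at t)"
    and xi_diff: "AE r in lborel. r > 0 \<longrightarrow> (\<exists>d. (xi r has_real_derivative d) (at t))"
    and X_def: "\<And>r s. X r s = (if 0 < r \<and> s \<in> {0..T} then xi r s else 0)"
  obtains \<delta> B L where "\<delta> > 0" "\<And>s. \<bar>s - t\<bar> < \<delta> \<Longrightarrow> s \<in> {0<..<T}"
    "\<And>s. (\<lambda>r. X r s) \<in> borel_measurable borel" "\<And>r. r > 0 \<Longrightarrow> \<bar>X r t\<bar> \<le> B"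
    "\<And>r s. r > 0 \<Longrightarrow> \<bar>s - t\<bar> < \<delta> \<Longrightarrow> \<bar>X r s - X r t\<bar> \<le> L * \<bar>s - t\<bar>"
    "AE r in lborel. r > 0 \<longrightarrow> (\<exists>d. (X r has_real_derivative d) (at t))"
proof -
  obtain \<delta>0 where \<delta>0: "\<delta>0 > 0" "\<And>s. \<bar>s - t\<bar> < \<delta>0 \<Longrightarrow> \<bar>q s - q t\<bar> \<le> (\<bar>dq\<bar> + 1) * \<bar>s - t\<bar>"
    using has_real_derivative_local_lipschitz[OF q_deriv] by blast
  define \<delta> where "\<delta> = min \<delta>0 (min t (T - t))"
  have \<delta>: "\<delta> > 0" using \<delta>0 t by (simp add: \<delta>_def)
  have near: "s \<in> {0<..<T}" if "\<bar>s - t\<bar> < \<delta>" for s using that by (auto simp: \<delta>_def abs_less_iff)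
  have X_eq: "X r s = xi r s" if "r > 0" "s \<in> {0<..<T}" for r s using that by (simp add: X_def)
  have "(\<lambda>r. X r s) \<in> borel_measurable borel" for s
  proof -
    have "(\<lambda>r::real. (r, s)) \<in> borel_measurable borel"
      by (intro borel_measurable_continuous_onI continuous_intros)
    from measurable_compose[OF this play_family_measurable[OF plays]] show ?thesis
      unfolding X_def by (simp only: fst_conv snd_conv)
  qed
  moreover obtain M where M: "\<And>u. u \<in> {0..T} \<Longrightarrow> \<bar>q u\<bar> \<le> M"
    using compact_imp_bounded[OF compact_continuous_image[OF q_cont compact_Icc]]
    unfolding bounded_iff by (metis image_eqI real_norm_def)
  then have "\<bar>X r t\<bar> \<le> 3 * M" if "r > 0" for r
    using play_abs_le[OF plays[OF that] that] t X_eq[OF that t] by auto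
  moreover have "\<bar>X r s - X r t\<bar> \<le> 2 * (\<bar>dq\<bar> + 1) * \<bar>s - t\<bar>" if "r > 0" "\<bar>s - t\<bar> < \<delta>" for r s
  proof -
    have "\<bar>xi r s - xi r t\<bar> \<le> 2 * (\<bar>dq\<bar> + 1) * \<bar>s - t\<bar>"
      by (rule play_local_lipschitz[OF plays[OF that(1)] _ \<delta>0(2)])
        (use near[OF that(2)] t that in \<open>auto simp: \<delta>_def\<close>)
    then show ?thesis using X_eq[OF that(1) t] X_eq[OF that(1) near[OF that(2)]] by simp
  qed
  moreover have "AE r in lborel. r > 0 \<longrightarrow> (\<exists>d. (X r has_real_derivative d) (at t))"
    using xi_diff
  proof eventually_elim
    case (elim r)
    show ?case
    proof
      assume "r > 0"
      then obtain d where "(xi r has_real_derivative d) (at t)" using elim by blast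
      then have "(X r has_real_derivative d) (at t)"
        by (rule has_field_derivative_transform_within_open[where S="{0<..<T}"]) (use t \<open>r > 0\<close> X_eq in auto)
      then show "\<exists>d. (X r has_real_derivative d) (at t)" ..
    qed
  qed
  ultimately show ?thesis using \<delta> near by (intro that) blast+
qed

section \<open>Preisach operator and potential\<close>

lemma Gpot_has_real_derivative:
  fixes g dg :: "real \<Rightarrow> real \<Rightarrow> real"
  assumes "\<And>v. (g r has_real_derivative dg r v) (at v)" "\<And>v. \<bar>dg r v\<bar> \<le> M"
  shows "(Gpot dg r has_real_derivative v * dg r v) (at v)"
proof -
  have c: "continuous_on UNIV (g r)" using assms(1) by (meson DERIV_isCont continuous_at_imp_continuous_on)
  have "Gpot dg r = (\<lambda>v. v * g r v - (LBINT x=0..v. g r x))"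
    using LBINT_id_times_derivative[OF assms] by (simp add: Gpot_def fun_eq_iff)
  then show ?thesis
    using DERIV_diff[OF DERIV_mult'[OF DERIV_ident assms(1)] has_real_derivative_LBINT[OF c]] by simp
qed

lemma Gpot_measurable:
  fixes g dg :: "real \<Rightarrow> real \<Rightarrow> real"
  assumes g_deriv: "\<And>r v. r > 0 \<Longrightarrow> (g r has_real_derivative dg r v) (at v)"
    and dg_bound: "\<And>r v. r > 0 \<Longrightarrow> \<bar>dg r v\<bar> \<le> \<mu> r"
    and g_meas: "\<And>v. set_borel_measurable lborel {0<..} (\<lambda>r. g r v)"
  shows "set_borel_measurable lborel {0<..} (\<lambda>r. Gpot dg r v)"
proof -
  define gt where "gt r v = indicator {0<..} r * g r v" for r v
  have gt_cont: "continuous_on UNIV (gt r)" for r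
  proof (cases "r > 0")
    case True
    then have "continuous_on UNIV (g r)"
      using g_deriv by (meson DERIV_isCont continuous_at_imp_continuous_on)
    then show ?thesis unfolding gt_def by (intro continuous_intros)
  qed (simp add: gt_def)
  have gt_meas: "(\<lambda>r. gt r v) \<in> borel_measurable borel" for v
    using g_meas[of v] by (simp add: gt_def set_borel_measurable_def)
  have "(\<lambda>p::real \<times> real. gt (fst p) v) \<in> borel_measurable borel" for v
    using measurable_compose[OF measurable_fst gt_meas] by (simp add: comp_def borel_prod[symmetric])
  moreover have "snd \<in> borel_measurable (borel :: (real \<times> real) measure)"
    by (simp add: borel_prod[symmetric])
  ultimately have "(\<lambda>p. gt (fst p) (snd p)) \<in> borel_measurable borel"
    by (rule borel_measurable_Caratheodory[where h="\<lambda>p. gt (fst p)", OF _ gt_cont])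
  then have LBINT_meas: "(\<lambda>r. LBINT x=0..v. gt r x) \<in> borel_measurable borel"
    by (rule borel_measurable_LBINT_parametric)
  have "indicator {0<..} r *\<^sub>R Gpot dg r v = v * gt r v - (LBINT x=0..v. gt r x)" for r
  proof (cases "r > 0")
    case True
    then show ?thesis
      using LBINT_id_times_derivative[OF g_deriv dg_bound] by (simp add: gt_def Gpot_def)
  qed (simp add: gt_def)
  then show ?thesis
    unfolding set_borel_measurable_def using gt_meas LBINT_meas by simp
qed

lemma borel_measurable_superposition:
  fixes h X :: "real \<Rightarrow> real \<Rightarrow> real"
  assumes h_cont: "\<And>r. r > 0 \<Longrightarrow> continuous_on UNIV (h r)"
    and h_meas: "\<And>v. set_borel_measurable lborel {0<..} (\<lambda>r. h r v)"
    and X_meas: "(\<lambda>r. X r s) \<in> borel_measurable borel"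
  shows "(\<lambda>r. indicator {0<..} r * h r (X r s)) \<in> borel_measurable lborel"
proof -
  have "continuous_on UNIV (\<lambda>v. indicator {0<..} r * h r v)" for r
    by (cases "r > 0") (auto intro: continuous_intros h_cont)
  moreover have "(\<lambda>r. indicator {0<..} r * h r v) \<in> borel_measurable borel" for v
    using h_meas[of v] by (simp add: set_borel_measurable_def)
  ultimately show ?thesis
    unfolding measurable_lborel2
    by (intro borel_measurable_Caratheodory[where h="\<lambda>r v. indicator {0<..} r * h r v", OF _ _ X_meas])
qed

lemma superposition_has_real_derivative:
  fixes h h' X :: "real \<Rightarrow> real \<Rightarrow> real" and W :: "real \<Rightarrow> real"
  assumes h_deriv: "\<And>r v. r > 0 \<Longrightarrow> (h r has_real_derivative h' r v) (at v)"
    and h'_bound: "\<And>r v. r > 0 \<Longrightarrow> \<bar>h' r v\<bar> \<le> W r"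
    and h0: "\<And>r. r > 0 \<Longrightarrow> h r 0 = 0"
    and h_meas: "\<And>v. set_borel_measurable lborel {0<..} (\<lambda>r. h r v)"
    and W_int: "set_integrable lborel {0<..} W"
    and \<delta>: "\<delta> > 0"
    and X_meas: "\<And>s. \<bar>s - t\<bar> < \<delta> \<Longrightarrow> (\<lambda>r. X r s) \<in> borel_measurable borel"
    and X_bound: "\<And>r. r > 0 \<Longrightarrow> \<bar>X r t\<bar> \<le> B"
    and X_lip: "\<And>r s. r > 0 \<Longrightarrow> \<bar>s - t\<bar> < \<delta> \<Longrightarrow> \<bar>X r s - X r t\<bar> \<le> L * \<bar>s - t\<bar>"
    and X_diff: "AE r in lborel. r > 0 \<longrightarrow> (\<exists>d. (X r has_real_derivative d) (at t))"
  obtains D where "integrable lborel D"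
    "AE r in lborel. ((\<lambda>s. indicator {0<..} r * h r (X r s)) has_real_derivative D r) (at t)"
    "((\<lambda>s. LINT r:{0<..}|lborel. h r (X r s)) has_real_derivative (\<integral>r. D r \<partial>lborel)) (at t)"
proof -
  define \<Phi> where "\<Phi> r s = indicator {0<..} r * h r (X r s)" for r s
  have h_lip: "\<bar>h r a - h r b\<bar> \<le> W r * \<bar>a - b\<bar>" if "r > 0" for r a b
    using field_differentiable_bound[of UNIV "h r" "h' r" "W r" a b] h_deriv h'_bound that by simp
  have W_nonneg: "0 \<le> W r" if "r > 0" for r using h'_bound[OF that, of 0] by linarith
  have "continuous_on UNIV (h r)" if "r > 0" for r
    using h_deriv[OF that] by (meson DERIV_isCont continuous_at_imp_continuous_on)
  then have \<Phi>_meas: "(\<lambda>r. \<Phi> r s) \<in> borel_measurable lborel" if "\<bar>s - t\<bar> < \<delta>" for s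
    unfolding \<Phi>_def by (rule borel_measurable_superposition[where h=h and X=X, OF _ h_meas X_meas[OF that]])
  have int: "integrable lborel (\<lambda>r. indicator {0<..} r * W r * c)" for c
    using W_int by (simp add: set_integrable_def)
  have \<Phi>_int: "integrable lborel (\<lambda>r. \<Phi> r t)"
  proof (rule Bochner_Integration.integrable_bound[OF int[of B] \<Phi>_meas])
    have "\<bar>h r (X r t)\<bar> \<le> W r * B" if "r > 0" for r
    proof -
      have "\<bar>h r (X r t)\<bar> \<le> W r * \<bar>X r t\<bar>" using h_lip[OF that, of "X r t" 0] h0[OF that] by simp
      also have "\<dots> \<le> W r * B" by (intro mult_left_mono X_bound that W_nonneg)
      finally show ?thesis .
    qed
    then have "norm (\<Phi> r t) \<le> norm (indicator {0<..} r * W r * B)" for r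
      by (cases "r > 0") (auto simp: \<Phi>_def intro: order_trans[OF _ abs_ge_self])
    then show "AE r in lborel. norm (\<Phi> r t) \<le> norm (indicator {0<..} r * W r * B)" by simp
  qed (use \<delta> in simp)
  have \<Phi>_lip: "\<bar>\<Phi> r s - \<Phi> r t\<bar> \<le> indicator {0<..} r * W r * L * \<bar>s - t\<bar>" if "\<bar>s - t\<bar> < \<delta>" for r s
  proof (cases "r > 0")
    case True
    have "\<bar>h r (X r s) - h r (X r t)\<bar> \<le> W r * \<bar>X r s - X r t\<bar>" by (rule h_lip[OF True])
    also have "\<dots> \<le> W r * (L * \<bar>s - t\<bar>)" by (intro mult_left_mono X_lip True that W_nonneg)
    finally show ?thesis using True by (simp add: \<Phi>_def mult.assoc)
  qed (simp add: \<Phi>_def)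
  have \<Phi>_diff: "AE r in lborel. \<exists>d. (\<Phi> r has_real_derivative d) (at t)"
    using X_diff
  proof eventually_elim
    case (elim r)
    show ?case
    proof (cases "r > 0")
      case True
      then obtain d where d: "(X r has_real_derivative d) (at t)" using elim by blast
      have "\<Phi> r = (\<lambda>s. h r (X r s))" using True by (simp add: \<Phi>_def fun_eq_iff)
      then show ?thesis using DERIV_chain2[OF h_deriv[OF True] d] by auto
    next
      case False
      then have "\<Phi> r = (\<lambda>s. 0)" by (simp add: \<Phi>_def fun_eq_iff)
      then show ?thesis using DERIV_const by metis
    qed
  qed
  obtain D where D: "integrable lborel D" "AE r in lborel. (\<Phi> r has_real_derivative D r) (at t)"
    "((\<lambda>s. \<integral>r. \<Phi> r s \<partial>lborel) has_real_derivative (\<integral>r. D r \<partial>lborel)) (at t)"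
    by (rule has_real_derivative_integral_lipschitz[OF \<delta> \<Phi>_meas int[of L] \<Phi>_int \<Phi>_lip \<Phi>_diff])
  have "(\<lambda>s. LINT r:{0<..}|lborel. h r (X r s)) = (\<lambda>s. \<integral>r. \<Phi> r s \<partial>lborel)"
    by (simp add: set_lebesgue_integral_def \<Phi>_def)
  with D show ?thesis unfolding \<Phi>_def by (intro that) auto
qed

lemma preisach_integrand_dissipation:
  fixes g dg :: "real \<Rightarrow> real \<Rightarrow> real" and x :: "real \<Rightarrow> real"
  assumes g_deriv: "\<And>v. (g r has_real_derivative dg r v) (at v)"
    and G_deriv: "\<And>v. (Gpot dg r has_real_derivative v * dg r v) (at v)"
    and "0 \<le> dg r (x t)" and x: "(x has_real_derivative d) (at t)" and "d * (q - x t) \<ge> 0"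
    and Dg: "((\<lambda>s. g r (x s)) has_real_derivative Dg) (at t)"
    and DG: "((\<lambda>s. Gpot dg r (x s)) has_real_derivative DG) (at t)"
  shows "0 \<le> q * Dg - DG"
proof -
  have "Dg = dg r (x t) * d" "DG = x t * dg r (x t) * d"
    using DERIV_unique[OF Dg DERIV_chain2[OF g_deriv x]] DERIV_unique[OF DG DERIV_chain2[OF G_deriv x]]
    by auto
  then have "q * Dg - DG = dg r (x t) * (d * (q - x t))" by (simp add: algebra_simps)
  then show ?thesis using assms(3,5) by simp
qed

lemma preisach_dissipation_inequality:
  fixes g dg xi :: "real \<Rightarrow> real \<Rightarrow> real" and \<mu> \<mu>1 q :: "real \<Rightarrow> real"
  assumes g0: "\<And>r. r > 0 \<Longrightarrow> g r 0 = 0"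
    and g_deriv: "\<And>r v. r > 0 \<Longrightarrow> (g r has_real_derivative dg r v) (at v)"
    and dg_bound: "\<And>r v. r > 0 \<Longrightarrow> 0 \<le> dg r v \<and> dg r v \<le> \<mu> r"
    and dg_bound1: "\<And>r v. r > 0 \<Longrightarrow> \<bar>v\<bar> * dg r v \<le> \<mu>1 r"
    and mu_int: "set_integrable lborel {0<..} \<mu>" and mu1_int: "set_integrable lborel {0<..} \<mu>1"
    and g_meas: "\<And>v. set_borel_measurable lborel {0<..} (\<lambda>r. g r v)"
    and plays: "\<And>r. r > 0 \<Longrightarrow> play_solution T r q (xi r)"
    and q_cont: "continuous_on {0..T} q" and t: "t \<in> {0<..<T}"
    and q_deriv: "(q has_real_derivative dq) (at t)"
    and xi_diff: "AE r in lborel. r > 0 \<longrightarrow> (\<exists>d. (xi r has_real_derivative d) (at t))"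
  obtains dP dU where "(preisach g xi has_real_derivative dP) (at t)"
    "(potential dg xi has_real_derivative dU) (at t)" "dU \<le> q t * dP"
proof -
  \<comment> \<open>the zero extension makes \<open>r \<mapsto> X r s\<close> Borel measurable\<close>
  define X where "X r s = (if 0 < r \<and> s \<in> {0..T} then xi r s else 0)" for r s
  obtain \<delta> B L where \<delta>: "\<delta> > 0" "\<And>s. \<bar>s - t\<bar> < \<delta> \<Longrightarrow> s \<in> {0<..<T}"
    and X: "\<And>s. (\<lambda>r. X r s) \<in> borel_measurable borel" "\<And>r. r > 0 \<Longrightarrow> \<bar>X r t\<bar> \<le> B"
      "\<And>r s. r > 0 \<Longrightarrow> \<bar>s - t\<bar> < \<delta> \<Longrightarrow> \<bar>X r s - X r t\<bar> \<le> L * \<bar>s - t\<bar>"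
      "AE r in lborel. r > 0 \<longrightarrow> (\<exists>d. (X r has_real_derivative d) (at t))"
    using play_family_local_regularity[OF plays q_cont t q_deriv xi_diff X_def] by blast
  have dg_abs: "\<bar>dg r v\<bar> \<le> \<mu> r" if "r > 0" for r v using dg_bound[OF that] by simp
  obtain Dg where Dg: "integrable lborel Dg"
      "AE r in lborel. ((\<lambda>s. indicator {0<..} r * g r (X r s)) has_real_derivative Dg r) (at t)"
      "((\<lambda>s. LINT r:{0<..}|lborel. g r (X r s)) has_real_derivative (\<integral>r. Dg r \<partial>lborel)) (at t)"
    by (rule superposition_has_real_derivative[OF g_deriv dg_abs g0 g_meas mu_int \<delta>(1) X]) auto
  have G_deriv: "(Gpot dg r has_real_derivative v * dg r v) (at v)" if "r > 0" for r v
    by (rule Gpot_has_real_derivative[OF g_deriv dg_abs]) (use that in auto)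
  have G'_bound: "\<bar>v * dg r v\<bar> \<le> \<mu>1 r" if "r > 0" for r v
    using dg_bound1[OF that] dg_bound[OF that] by (simp add: abs_mult)
  have G0: "Gpot dg r 0 = 0" for r by (simp add: Gpot_def zero_ereal_def[symmetric])
  have G_meas: "set_borel_measurable lborel {0<..} (\<lambda>r. Gpot dg r v)" for v
    by (rule Gpot_measurable[OF g_deriv dg_abs g_meas])
  obtain DG where DG: "integrable lborel DG"
      "AE r in lborel. ((\<lambda>s. indicator {0<..} r * Gpot dg r (X r s)) has_real_derivative DG r) (at t)"
      "((\<lambda>s. LINT r:{0<..}|lborel. Gpot dg r (X r s)) has_real_derivative (\<integral>r. DG r \<partial>lborel)) (at t)"
    by (rule superposition_has_real_derivative[where h'="\<lambda>r v. v * dg r v",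
          OF G_deriv G'_bound G0 G_meas mu1_int \<delta>(1) X])
  have X_eq: "X r s = xi r s" if "r > 0" "s \<in> {0<..<T}" for r s using that by (simp add: X_def)
  have "(LINT r:{0<..}|lborel. g r (X r s)) = preisach g xi s"
    "(LINT r:{0<..}|lborel. Gpot dg r (X r s)) = potential dg xi s" if "s \<in> {0<..<T}" for s
    unfolding preisach_def potential_def using that by (auto intro!: set_lebesgue_integral_cong simp: X_eq)
  then have derivs: "(preisach g xi has_real_derivative (\<integral>r. Dg r \<partial>lborel)) (at t)"
    "(potential dg xi has_real_derivative (\<integral>r. DG r \<partial>lborel)) (at t)"
    using has_field_derivative_transform_within_open[OF Dg(3), of "{0<..<T}"]
      has_field_derivative_transform_within_open[OF DG(3), of "{0<..<T}"] t by auto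
  have "AE r in lborel. 0 \<le> q t * Dg r - DG r"
    using X(4) Dg(2) DG(2)
  proof eventually_elim
    case (elim r)
    show ?case
    proof (cases "r > 0")
      case True
      then obtain d where d: "(X r has_real_derivative d) (at t)" using elim(1) by blast
      then have "(xi r has_real_derivative d) (at t)"
        by (rule has_field_derivative_transform_within_open[where S="{0<..<T}"]) (use t True X_eq in auto)
      from play_derivative_sign[OF plays[OF True] True q_cont t this] have sign: "d * (q t - X r t) \<ge> 0"
        using X_eq[OF True t] by simp
      show ?thesis
        by (rule preisach_integrand_dissipation[where g=g and dg=dg and r=r and x="X r",
              OF g_deriv[OF True] G_deriv[OF True] _ d sign])
          (use elim(2,3) True dg_bound in auto)
    next
      case False
      then have "((\<lambda>s. 0) has_real_derivative Dg r) (at t)" "((\<lambda>s. 0) has_real_derivative DG r) (at t)"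
        using elim(2,3) by simp_all
      then have "Dg r = 0" "DG r = 0" using DERIV_unique[OF _ DERIV_const] by blast+
      then show ?thesis by simp
    qed
  qed
  then have "0 \<le> (\<integral>r. q t * Dg r - DG r \<partial>lborel)" by (rule integral_nonneg_AE)
  also have "\<dots> = q t * (\<integral>r. Dg r \<partial>lborel) - (\<integral>r. DG r \<partial>lborel)" using Dg(1) DG(1) by simp
  finally show ?thesis using derivs by (intro that) auto
qed

section \<open>The energy inequality\<close>

lemma energy_inequality_at:
  fixes c \<kappa> e :: real and f f' \<mu> \<mu>1 \<epsilon> E :: "real \<Rightarrow> real" and g dg xi :: "real \<Rightarrow> real \<Rightarrow> real"
  assumes g0: "\<And>r. r > 0 \<Longrightarrow> g r 0 = 0"
    and g_deriv: "\<And>r v. r > 0 \<Longrightarrow> (g r has_real_derivative dg r v) (at v)"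
    and dg_bound: "\<And>r v. r > 0 \<Longrightarrow> 0 \<le> dg r v \<and> dg r v \<le> \<mu> r"
    and dg_bound1: "\<And>r v. r > 0 \<Longrightarrow> \<bar>v\<bar> * dg r v \<le> \<mu>1 r"
    and mu_int: "set_integrable lborel {0<..} \<mu>" and mu1_int: "set_integrable lborel {0<..} \<mu>1"
    and g_meas: "\<And>v. set_borel_measurable lborel {0<..} (\<lambda>r. g r v)"
    and f_deriv: "\<And>x. (f has_real_derivative f' x) (at x)" and f_pos: "\<And>x. f x > 0"
    and plays: "\<And>r. r > 0 \<Longrightarrow> play_solution T r (\<lambda>t. E t / f (\<epsilon> t)) (xi r)"
    and q_cont: "continuous_on {0..T} (\<lambda>t. E t / f (\<epsilon> t))" and t: "t \<in> {0<..<T}"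
    and eps_diff: "\<exists>d. (\<epsilon> has_real_derivative d) (at t)" and E_diff: "\<exists>d. (E has_real_derivative d) (at t)"
    and xi_diff: "AE r in lborel. r > 0 \<longrightarrow> (\<exists>d. (xi r has_real_derivative d) (at t))"
  shows "\<exists>d\<epsilon> dD dF.
       (\<epsilon> has_real_derivative d\<epsilon>) (at t) \<and>
       ((\<lambda>s. e * \<epsilon> s + \<kappa> * E s + preisach g xi s) has_real_derivative dD) (at t) \<and>
       ((\<lambda>s. c / 2 * (\<epsilon> s)\<^sup>2 + \<kappa> / 2 * (E s)\<^sup>2 + f (\<epsilon> s) * potential dg xi s)
          has_real_derivative dF) (at t) \<and>
       d\<epsilon> * (c * \<epsilon> t - e * E t + f' (\<epsilon> t) * potential dg xi t) + dD * E t - dF \<ge> 0"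
proof -
  obtain d\<epsilon> dE where eps_deriv: "(\<epsilon> has_real_derivative d\<epsilon>) (at t)"
    and E_deriv: "(E has_real_derivative dE) (at t)"
    using eps_diff E_diff by blast
  have f_eps: "((\<lambda>s. f (\<epsilon> s)) has_real_derivative f' (\<epsilon> t) * d\<epsilon>) (at t)"
    by (rule DERIV_chain2[OF f_deriv eps_deriv])
  obtain dq where "((\<lambda>t. E t / f (\<epsilon> t)) has_real_derivative dq) (at t)"
    using DERIV_divide[OF E_deriv f_eps] f_pos by (metis less_irrefl)
  then obtain dP dU where P: "(preisach g xi has_real_derivative dP) (at t)"
    and U: "(potential dg xi has_real_derivative dU) (at t)" and dissipation: "dU \<le> E t / f (\<epsilon> t) * dP"
    using preisach_dissipation_inequality[OF g0 g_deriv dg_bound dg_bound1 mu_int mu1_int g_meas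
        plays q_cont t _ xi_diff] by blast
  define dD where "dD = e * d\<epsilon> + \<kappa> * dE + dP"
  define dF where "dF = c / 2 * (2 * \<epsilon> t * d\<epsilon>) + \<kappa> / 2 * (2 * E t * dE)
    + (f (\<epsilon> t) * dU + f' (\<epsilon> t) * d\<epsilon> * potential dg xi t)"
  have D: "((\<lambda>s. e * \<epsilon> s + \<kappa> * E s + preisach g xi s) has_real_derivative dD) (at t)"
    unfolding dD_def by (intro DERIV_add DERIV_cmult eps_deriv E_deriv P)
  have "((\<lambda>s. (\<epsilon> s)\<^sup>2) has_real_derivative 2 * \<epsilon> t * d\<epsilon>) (at t)"
    "((\<lambda>s. (E s)\<^sup>2) has_real_derivative 2 * E t * dE) (at t)"
    using DERIV_power[OF eps_deriv, of 2] DERIV_power[OF E_deriv, of 2] by (simp_all add: mult_ac)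
  then have F: "((\<lambda>s. c / 2 * (\<epsilon> s)\<^sup>2 + \<kappa> / 2 * (E s)\<^sup>2 + f (\<epsilon> s) * potential dg xi s)
      has_real_derivative dF) (at t)"
    unfolding dF_def by (intro DERIV_add DERIV_cmult DERIV_mult' f_eps U)
  have "d\<epsilon> * (c * \<epsilon> t - e * E t + f' (\<epsilon> t) * potential dg xi t) + dD * E t - dF
      = f (\<epsilon> t) * (E t / f (\<epsilon> t) * dP - dU)"
    using f_pos[of "\<epsilon> t"] by (simp add: dD_def dF_def field_simps)
  also have "\<dots> \<ge> 0" using f_pos[of "\<epsilon> t"] dissipation by simp
  finally show ?thesis using eps_deriv D F by blast
qed

theorem mainTheorem7:
  fixes T c \<kappa> e :: real and f f' \<mu> \<mu>1 \<epsilon> E :: "real \<Rightarrow> real"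
    and g dg xi :: "real \<Rightarrow> real \<Rightarrow> real"
  assumes T: "T > 0"
    and g0: "\<forall>r>0. g r 0 = 0"
    and g_deriv: "\<forall>r>0. \<forall>v. (g r has_real_derivative dg r v) (at v)"
    and dg_bound: "\<forall>r>0. \<forall>v. 0 \<le> dg r v \<and> dg r v \<le> \<mu> r"
    and dg_bound1: "\<forall>r>0. \<forall>v. \<bar>v\<bar> * dg r v \<le> \<mu>1 r"
    and mu_int: "set_integrable lborel {0<..} \<mu>"
    and mu1_int: "set_integrable lborel {0<..} \<mu>1"
    and g_meas: "\<forall>v. set_borel_measurable lborel {0<..} (\<lambda>r. g r v)"
    and c: "c > 0" and kappa: "\<kappa> > 0"
    and f_deriv: "\<forall>x. (f has_real_derivative f' x) (at x)"
    and f'_cont: "continuous_on UNIV f'"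
    and f_pos: "\<forall>x. f x > 0"
    and f'_bdd: "\<forall>K. bounded K \<longrightarrow> bounded (f' ` K)"
    and eps: "W11 T \<epsilon>" and EE: "W11 T E"
    and play: "\<forall>r>0. play_solution T r (\<lambda>t. E t / f (\<epsilon> t)) (xi r)"
  shows "AE t in lborel. t \<in> {0<..<T} \<longrightarrow>
    (\<exists>d\<epsilon> dD dF.
       (\<epsilon> has_real_derivative d\<epsilon>) (at t) \<and>
       ((\<lambda>s. e * \<epsilon> s + \<kappa> * E s + preisach g xi s) has_real_derivative dD) (at t) \<and>
       ((\<lambda>s. c / 2 * (\<epsilon> s)\<^sup>2 + \<kappa> / 2 * (E s)\<^sup>2 + f (\<epsilon> s) * potential dg xi s)
          has_real_derivative dF) (at t) \<and>
       d\<epsilon> * (c * \<epsilon> t - e * E t + f' (\<epsilon> t) * potential dg xi t) + dD * E t - dF \<ge> 0)"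
proof -
  have plays: "\<And>r. r > 0 \<Longrightarrow> play_solution T r (\<lambda>t. E t / f (\<epsilon> t)) (xi r)" using play by blast
  have f_cont: "continuous_on UNIV f" using f_deriv by (meson DERIV_isCont continuous_at_imp_continuous_on)
  have "continuous_on {0..T} (\<lambda>t. f (\<epsilon> t))"
    by (rule continuous_on_compose2[OF f_cont W11_continuous_on[OF eps]]) auto
  moreover have "\<forall>t\<in>{0..T}. f (\<epsilon> t) \<noteq> 0" using f_pos by (metis less_irrefl)
  ultimately have q_cont: "continuous_on {0..T} (\<lambda>t. E t / f (\<epsilon> t))"
    by (rule continuous_on_divide[OF W11_continuous_on[OF EE]])
  have xi_diff: "AE t in lborel. t \<in> {0<..<T} \<longrightarrow>
      (AE r in lborel. r > 0 \<longrightarrow> (\<exists>d. (xi r has_real_derivative d) (at t)))"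
    by (rule play_family_differentiable_ae[OF plays])
  show ?thesis
    using W11_differentiable_ae[OF eps] W11_differentiable_ae[OF EE] xi_diff
  proof eventually_elim
    case (elim t)
    then show ?case
      by (intro impI energy_inequality_at[OF g0[rule_format] g_deriv[rule_format] dg_bound[rule_format]
            dg_bound1[rule_format] mu_int mu1_int g_meas[rule_format] f_deriv[rule_format] f_pos[rule_format]
            plays q_cont]) auto
  qed
qed

end
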